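(* Let $\chi$ be a character of $T$ of minimal depth $r\in\mathbb{Z}_{\ge0}$. Then for every integer $d\ge r+1$, $$\dim_{\mathbb{C}}\mathrm{Hom}_{\mathcal{K}}(V_\chi^{\mathcal{K}_d},V_\chi^{\mathcal{K}_d})=\begin{cases}d+1&\text{if } r=0 \text{ and } \chi|_{S_0}=\mathbbm{1},\\ d-r&\text{otherwise}.\end{cases}$$
   Context: Let $F$ be a non-archimedean local field with odd residual characteristic, ring of integers $\mathcal{O}_F$, maximal ideal $\mathfrak{p}_F$. Fix a non-square $\epsilon\in\mathcal{O}_F^\times$, $E=F[\sqrt\epsilon]$ with ring of integers $\mathcal{O}_E$, maximal ideal $\mathfrak{p}_E$; $\overline{x}$ is Galois conjugation. $G=\{g\in\mathrm{GL}_2(E):\overline{g}^{\top}\mathrm{w}g=\mathrm{w}\}$, $\mathrm{w}=\begin{pmatrix}0&1\\1&0\end{pmatrix}$; $\mathcal{K}=G\cap M_2(\mathcal{O}_E)$, $\mathcal{K}_n=\{g\in\mathcal{K}:g\equiv I\bmod\mathfrak{p}_E^n\}$. $B$ upper triangular matrices in $G$; $T=\{t(a)=\mathrm{diag}(a,\overline a^{-1}):a\in E^\times\}$; $U=\{\begin{pmatrix}1&\sqrt\epsilon b\\0&1\end{pmatrix}:b\in F\}$. $T_0=\{t(a):a\in\mathcal{O}_E^\times\}$, $T_n=\{t(a):a\in1+\mathfrak{p}_E^n\}$ ($n\ge1$); $S=\{\mathrm{diag}(a,a^{-1}):a\in F^\times\}$, $S_0$ ($a\in\mathcal{O}_F^\times$),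 $S_n$ ($a\in1+\mathfrak{p}_F^n$). A character $\chi$ of $T$ has depth $r$ if $\chi|_{T_r}\ne\mathbbm{1}$, $\chi|_{T_{r+1}}=\mathbbm{1}$ (trivial on $T_0$ also counts as depth $0$); true depth = depth of $\chi|_S$; minimal depth $r$ means depth and true depth both equal $r$. $\pi_\chi=\mathrm{Ind}_B^G\chi$ ($\chi$ extended trivially on $U$) acts by right translation on the space $V_\chi$ of locally constant $f:G\to\mathbb{C}$ with $f(bg)=\chi(b)f(g)$, $b\in B$; $V_\chi^{\mathcal{K}_n}$ is the $\mathcal{K}$-subrepresentation of $\mathcal{K}_n$-fixed vectors. *)

theory Defs
  imports Complex_Main "HOL-Library.Function_Algebras"
begin

datatype 'a mat2 = M2 'a 'a 'a 'a  (* M2 a b c d  is the matrix  [[a, b], [c, d]] *)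

fun mmul :: "'a::ring mat2 \<Rightarrow> 'a mat2 \<Rightarrow> 'a mat2" where
  "mmul (M2 a b c d) (M2 a' b' c' d') =
     M2 (a*a' + b*c') (a*b' + b*d') (c*a' + d*c') (c*b' + d*d')"

fun mdet :: "'a::comm_ring mat2 \<Rightarrow> 'a" where
  "mdet (M2 a b c d) = a*d - b*c"

definition wmat :: "'a::ring_1 mat2" where "wmat = M2 0 1 1 0"

definition Imat :: "'a::ring_1 mat2" where "Imat = M2 1 0 0 1"

text \<open>conjugate transpose, cj = Galois conjugation of E/F\<close>
fun cjT :: "('a \<Rightarrow> 'a) \<Rightarrow> 'a mat2 \<Rightarrow> 'a mat2" where
  "cjT cj (M2 a b c d) = M2 (cj a) (cj c) (cj b) (cj d)"

fun entries :: "'a mat2 \<Rightarrow> 'a set" where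
  "entries (M2 a b c d) = {a, b, c, d}"

fun msub :: "'a::ab_group_add mat2 \<Rightarrow> 'a mat2 \<Rightarrow> 'a mat2" where
  "msub (M2 a b c d) (M2 a' b' c' d') = M2 (a-a') (b-b') (c-c') (d-d')"

fun ent11 :: "'a mat2 \<Rightarrow> 'a" where "ent11 (M2 a b c d) = a"
fun ent21 :: "'a mat2 \<Rightarrow> 'a" where "ent21 (M2 a b c d) = c"

section \<open>Valuation-theoretic notions on E (v is the normalized valuation of E, used on nonzero elements)\<close>

text \<open>membership in p_E^n (for n = 0 this is O_E)\<close>
definition inP :: "('e::field \<Rightarrow> int) \<Rightarrow> nat \<Rightarrow> 'e \<Rightarrow> bool" where
  "inP v n x \<longleftrightarrow> x = 0 \<or> int n \<le> v x"

definition v_cauchy :: "('e::field \<Rightarrow> int) \<Rightarrow> (nat \<Rightarrow> 'e) \<Rightarrow> bool" where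
  "v_cauchy v X \<longleftrightarrow> (\<forall>N. \<exists>M. \<forall>m\<ge>M. \<forall>n\<ge>M. inP v N (X m - X n))"

definition v_converges :: "('e::field \<Rightarrow> int) \<Rightarrow> (nat \<Rightarrow> 'e) \<Rightarrow> 'e \<Rightarrow> bool" where
  "v_converges v X L \<longleftrightarrow> (\<forall>N. \<exists>M. \<forall>n\<ge>M. inP v N (X n - L))"

text \<open>
  The standing setup: E is a field with a Galois involution cj whose fixed field is F,
  v is a discrete valuation on E normalized so that v(E^x) = Z, E is complete with
  finite residue field of odd characteristic (so E and F are non-archimedean local
  fields), eps is a unit of O_F which is a non-square in F, and s is a square root of
  eps in E with cj s = - s (so E = F[sqrt eps] is the unramified quadratic extension;
  a uniformizer of E can be taken in F).\<close>
definition unram_setup :: "('e::field \<Rightarrow> 'e) \<Rightarrow> ('e \<Rightarrow> int) \<Rightarrow> 'e \<Rightarrow> 'e \<Rightarrow> bool" where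
  "unram_setup cj v eps s \<longleftrightarrow>
     (\<forall>x y. cj (x + y) = cj x + cj y) \<and> (\<forall>x y. cj (x * y) = cj x * cj y) \<and>
     cj 1 = 1 \<and> (\<forall>x. cj (cj x) = x) \<and>
     (\<forall>x y. x \<noteq> 0 \<longrightarrow> y \<noteq> 0 \<longrightarrow> v (x * y) = v x + v y) \<and>
     (\<forall>x y. x \<noteq> 0 \<longrightarrow> y \<noteq> 0 \<longrightarrow> x + y \<noteq> 0 \<longrightarrow> min (v x) (v y) \<le> v (x + y)) \<and>
     (\<forall>x. x \<noteq> 0 \<longrightarrow> v (cj x) = v x) \<and>
     (\<exists>\<pi>. \<pi> \<noteq> 0 \<and> cj \<pi> = \<pi> \<and> v \<pi> = 1) \<and>
     (\<forall>X. v_cauchy v X \<longrightarrow> (\<exists>L. v_converges v X L)) \<and>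
     (\<exists>R. finite R \<and> (\<forall>x. inP v 0 x \<longrightarrow> (\<exists>r\<in>R. inP v 1 (x - r)))) \<and>
     (2::'e) \<noteq> 0 \<and> v 2 = 0 \<and>
     eps \<noteq> 0 \<and> cj eps = eps \<and> v eps = 0 \<and> \<not> (\<exists>y. cj y = y \<and> y * y = eps) \<and>
     s * s = eps \<and> cj s = - s"

definition inG :: "('e::field \<Rightarrow> 'e) \<Rightarrow> 'e mat2 \<Rightarrow> bool" where
  "inG cj g \<longleftrightarrow> mdet g \<noteq> 0 \<and> mmul (cjT cj g) (mmul wmat g) = wmat"

definition Kgrp :: "('e::field \<Rightarrow> 'e) \<Rightarrow> ('e \<Rightarrow> int) \<Rightarrow> 'e mat2 set" where
  "Kgrp cj v = {g. inG cj g \<and> (\<forall>x\<in>entries g. inP v 0 x)}"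

definition Kn :: "('e::field \<Rightarrow> 'e) \<Rightarrow> ('e \<Rightarrow> int) \<Rightarrow> nat \<Rightarrow> 'e mat2 set" where
  "Kn cj v n = {g \<in> Kgrp cj v. \<forall>x\<in>entries (msub g Imat). inP v n x}"

definition Bgrp :: "('e::field \<Rightarrow> 'e) \<Rightarrow> 'e mat2 set" where
  "Bgrp cj = {g. inG cj g \<and> ent21 g = 0}"

section \<open>Characters of T = {t(a) = diag(a, cj(a)^-1)}, identified with functions on E^x\<close>

definition is_char :: "('e::field \<Rightarrow> complex) \<Rightarrow> bool" where
  "is_char chi \<longleftrightarrow> (\<forall>a. a \<noteq> 0 \<longrightarrow> chi a \<noteq> 0) \<and>
     (\<forall>a b. a \<noteq> 0 \<longrightarrow> b \<noteq> 0 \<longrightarrow> chi (a * b) = chi a * chi b)"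

definition Tmem :: "('e::field \<Rightarrow> int) \<Rightarrow> nat \<Rightarrow> 'e \<Rightarrow> bool" where
  "Tmem v n a \<longleftrightarrow> a \<noteq> 0 \<and> (if n = 0 then v a = 0 else inP v n (a - 1))"

text \<open>depth of chi restricted to the subgroup {t(a) : P a} (P = True gives T, P = "a in F" gives S,
  since t(a) = diag(a, a^-1) for a in F)\<close>
definition has_depth :: "('e::field \<Rightarrow> bool) \<Rightarrow> ('e \<Rightarrow> int) \<Rightarrow> ('e \<Rightarrow> complex) \<Rightarrow> nat \<Rightarrow> bool" where
  "has_depth P v chi r \<longleftrightarrow>
     ((\<exists>a. P a \<and> Tmem v r a \<and> chi a \<noteq> 1) \<and> (\<forall>a. P a \<and> Tmem v (Suc r) a \<longrightarrow> chi a = 1)) \<or>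
     (r = 0 \<and> (\<forall>a. P a \<and> Tmem v 0 a \<longrightarrow> chi a = 1))"

definition minimal_depth :: "('e::field \<Rightarrow> 'e) \<Rightarrow> ('e \<Rightarrow> int) \<Rightarrow> ('e \<Rightarrow> complex) \<Rightarrow> nat \<Rightarrow> bool" where
  "minimal_depth cj v chi r \<longleftrightarrow> has_depth (\<lambda>_. True) v chi r \<and> has_depth (\<lambda>a. cj a = a) v chi r"

text \<open>chi extended to B = TU trivially on U: chi(b) = chi(upper-left entry of b)\<close>
definition rtrans :: "'e::ring mat2 \<Rightarrow> ('e mat2 \<Rightarrow> complex) \<Rightarrow> ('e mat2 \<Rightarrow> complex)" where
  "rtrans k f = (\<lambda>g. f (mmul g k))"

text \<open>functions on G are represented as functions on all matrices vanishing off G;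
  local constancy w.r.t. the topology of G, which has the g K_n as a neighbourhood basis at g\<close>
definition Vchi :: "('e::field \<Rightarrow> 'e) \<Rightarrow> ('e \<Rightarrow> int) \<Rightarrow> ('e \<Rightarrow> complex) \<Rightarrow> ('e mat2 \<Rightarrow> complex) set" where
  "Vchi cj v chi = {f.
     (\<forall>g. \<not> inG cj g \<longrightarrow> f g = 0) \<and>
     (\<forall>b\<in>Bgrp cj. \<forall>g. inG cj g \<longrightarrow> f (mmul b g) = chi (ent11 b) * f g) \<and>
     (\<forall>g. inG cj g \<longrightarrow> (\<exists>n. \<forall>k\<in>Kn cj v n. f (mmul g k) = f g))}"

definition Vfix :: "('e::field \<Rightarrow> 'e) \<Rightarrow> ('e \<Rightarrow> int) \<Rightarrow> ('e \<Rightarrow> complex) \<Rightarrow> nat \<Rightarrow> ('e mat2 \<Rightarrow> complex) set" where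
  "Vfix cj v chi n = {f \<in> Vchi cj v chi. \<forall>k\<in>Kn cj v n. rtrans k f = f}"

text \<open>Hom_K(W, W) for a K-stable subspace W: K-equivariant C-linear maps W -> W
  (extended by 0 outside W)\<close>
definition HomK :: "('e::field \<Rightarrow> 'e) \<Rightarrow> ('e \<Rightarrow> int) \<Rightarrow> ('e mat2 \<Rightarrow> complex) set \<Rightarrow>
    (('e mat2 \<Rightarrow> complex) \<Rightarrow> ('e mat2 \<Rightarrow> complex)) set" where
  "HomK cj v W = {\<phi>.
     (\<forall>f\<in>W. \<phi> f \<in> W) \<and> (\<forall>f. f \<notin> W \<longrightarrow> \<phi> f = 0) \<and>
     (\<forall>f\<in>W. \<forall>h\<in>W. \<phi> (f + h) = \<phi> f + \<phi> h) \<and>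
     (\<forall>c. \<forall>f\<in>W. \<phi> (\<lambda>g. c * f g) = (\<lambda>g. c * \<phi> f g)) \<and>
     (\<forall>k\<in>Kgrp cj v. \<forall>f\<in>W. \<phi> (rtrans k f) = rtrans k (\<phi> f))}"

definition cdimH :: "(('a \<Rightarrow> complex) \<Rightarrow> ('a \<Rightarrow> complex)) set \<Rightarrow> nat" where
  "cdimH S = vector_space.dim (\<lambda>(c::complex) \<phi>. \<lambda>f g. c * \<phi> f g) S"

end

theory Submission
  imports Defs
begin

text \<open>By Frobenius reciprocity, made concrete by the Iwasawa decomposition \<open>G = B K\<close>,
  \<open>K\<close>-intertwiners of \<open>V\<^sub>\<chi>\<^sup>K\<^sub>d\<close> correspond to linear functionals \<open>l\<close> on it with
  \<open>l(\<beta> f) = \<chi>(\<beta>) l(f)\<close> for \<open>\<beta> \<in> B \<inter> K\<close>. Such a functional is determined by its values on the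
  functions supported on single double cosets \<open>B x K\<^sub>d\<close>, and it can be nonzero there exactly when
  \<open>x \<beta> = b x k\<close> forces \<open>\<chi>(\<beta>) = \<chi>(b)\<close>; so the dimension counts these compatible double cosets
  up to \<open>B \<inter> K\<close>. They are represented by the lower unipotent matrices with entry \<open>s \<pi>\<^sup>j\<close>,
  \<open>0 \<le> j \<le> d\<close>, which the valuation of the ratio of the bottom row entries separates; reaching
  all double cosets uses that the norm \<open>O\<^sub>E\<^sup>\<times> \<rightarrow> O\<^sub>F\<^sup>\<times>\<close> is onto modulo every \<open>p\<^sup>n\<close> (residue
  field counting plus Newton iteration). The \<open>j\<close>-th representative is compatible iff \<open>\<chi>\<close> is
  trivial on \<open>S\<^sub>j\<close>, and minimal depth \<open>r\<close> makes this hold exactly for \<open>j > r\<close>, or for all \<open>j\<close>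
  when \<open>r = 0\<close> and \<open>\<chi>\<close> is trivial on \<open>S\<^sub>0\<close>.\<close>

lemma mmul_assoc: "mmul (mmul a b) c = mmul a (mmul b (c::'a::ring mat2))"
  by (cases a; cases b; cases c) (simp add: algebra_simps)

lemma mmul_Imat [simp]: "mmul Imat g = (g::'a::ring_1 mat2)" "mmul g Imat = g"
  by (cases g; simp add: Imat_def)+

lemma mdet_mmul: "mdet (mmul g h) = mdet g * mdet (h::'a::comm_ring mat2)"
  by (cases g; cases h) (simp add: algebra_simps)

lemma mmul_inverse_commute:
  fixes A B :: "'a::field mat2"
  assumes "mmul A B = Imat"
  shows "mmul B A = Imat"
proof -
  obtain a b c d where A: "A = M2 a b c d" by (cases A)
  obtain p q r t where B: "B = M2 p q r t" by (cases B)
  have e: "a*p + b*r = 1" "a*q + b*t = 0" "c*p + d*r = 0" "c*q + d*t = 1"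
    using assms A B by (auto simp: Imat_def)
  define D where "D = a*d - b*c"
  have "(a*p + b*r)*(c*q + d*t) - (a*q + b*t)*(c*p + d*r) = D * (p*t - q*r)"
    unfolding D_def by (simp add: algebra_simps)
  then have Dnz: "D \<noteq> 0" using e by auto
  \<comment> \<open>Cramer's rule: B is the adjugate of A divided by D\<close>
  have "D * p = d*(a*p + b*r) - b*(c*p + d*r)" "D * q = d*(a*q + b*t) - b*(c*q + d*t)"
    "D * r = a*(c*p + d*r) - c*(a*p + b*r)" "D * t = a*(c*q + d*t) - c*(a*q + b*t)"
    unfolding D_def by (simp_all add: algebra_simps)
  then have adj: "D * p = d" "D * q = - b" "D * r = - c" "D * t = a" using e by simp_all
  have "D * (p*a + q*c) = D" "D * (p*b + q*d) = 0" "D * (r*a + t*c) = 0" "D * (r*b + t*d) = D"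
    by (simp_all add: distrib_left mult.assoc[symmetric] adj) (simp_all add: D_def algebra_simps)
  then show ?thesis using Dnz A B by (simp add: Imat_def)
qed

fun ent22 :: "'a mat2 \<Rightarrow> 'a" where "ent22 (M2 a b c d) = d"

lemma card_le_twice_card_image:
  assumes fin: "finite A"
    and fibres: "\<And>a. a \<in> A \<Longrightarrow> card {a'\<in>A. f a' = f a} \<le> 2"
    and a0: "a0 \<in> A" "{a'\<in>A. f a' = f a0} = {a0}"
  shows "card A + 1 \<le> 2 * card (f ` A)"
proof -
  define fib where "fib c = {a'\<in>A. f a' = c}" for c
  have "A = (\<Union>c\<in>f ` A. fib c)" by (auto simp: fib_def)
  then have "card A \<le> (\<Sum>c\<in>f ` A. card (fib c))"
    using card_UN_le[of "f ` A" fib] fin by simp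
  also have "\<dots> = card (fib (f a0)) + (\<Sum>c\<in>f ` A - {f a0}. card (fib c))"
    using fin a0 by (subst sum.remove[of _ "f a0"]) auto
  also have "\<dots> \<le> 1 + (\<Sum>c\<in>f ` A - {f a0}. 2)"
  proof (intro add_mono sum_mono)
    show "card (fib (f a0)) \<le> 1" using a0 by (simp add: fib_def)
    fix c assume "c \<in> f ` A - {f a0}"
    then show "card (fib c) \<le> 2" using fibres by (auto simp: fib_def)
  qed
  also have "\<dots> = 1 + 2 * (card (f ` A) - 1)"
    using fin a0 by (simp add: card_Diff_singleton)
  finally have le: "card A \<le> 1 + 2 * (card (f ` A) - 1)" .
  have "card (f ` A) \<ge> 1" using a0 fin by (auto simp: Suc_le_eq card_gt_0_iff)
  then show ?thesis using le by linarith
qed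

lemma (in vector_space) linear_on_subspace_sum:
  assumes S: "subspace S" and add: "\<And>x y. x \<in> S \<Longrightarrow> y \<in> S \<Longrightarrow> e (x + y) = e x + e y"
    and scale: "\<And>c x. x \<in> S \<Longrightarrow> e (c *s x) = c * e x" and f: "\<And>j. j \<in> A \<Longrightarrow> f j \<in> S"
  shows "e (sum f A) = (\<Sum>j\<in>A. e (f j))"
proof -
  have e0: "e 0 = 0" using scale[OF subspace_0[OF S], of 0] by simp
  show ?thesis
  proof (cases "finite A")
    case True
    then show ?thesis using f
    proof (induction A rule: finite_induct)
      case (insert j A)
      then have "e (f j + sum f A) = e (f j) + e (sum f A)" by (intro add subspace_sum[OF S]) auto
      then show ?case using insert by simp
    qed (simp add: e0)
  qed (simp add: e0)
qed

lemma (in vector_space) dim_eq_card_biorthogonal: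
  assumes S: "subspace S" and J: "finite J" and b: "\<And>j. j \<in> J \<Longrightarrow> b j \<in> S"
    and e_add: "\<And>i x y. i \<in> J \<Longrightarrow> x \<in> S \<Longrightarrow> y \<in> S \<Longrightarrow> e i (x + y) = e i x + e i y"
    and e_scale: "\<And>i c x. i \<in> J \<Longrightarrow> x \<in> S \<Longrightarrow> e i (c *s x) = c * e i x"
    and e_b: "\<And>i j. i \<in> J \<Longrightarrow> j \<in> J \<Longrightarrow> e i (b j) = (if i = j then 1 else 0)"
    and e_zero: "\<And>x. x \<in> S \<Longrightarrow> (\<And>i. i \<in> J \<Longrightarrow> e i x = 0) \<Longrightarrow> x = 0"
  shows "dim S = card J"
proof -
  have e_comb: "e i (\<Sum>j\<in>J. c j *s b j) = c i" if i: "i \<in> J" for i c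
  proof -
    have "e i (\<Sum>j\<in>J. c j *s b j) = (\<Sum>j\<in>J. e i (c j *s b j))"
      using subspace_scale[OF S b] by (intro linear_on_subspace_sum[OF S e_add[OF i] e_scale[OF i]])
    also have "\<dots> = (\<Sum>j\<in>J. if j = i then c j else 0)"
      using e_b e_scale[OF i b] i by (intro sum.cong) auto
    finally show ?thesis using J i by simp
  qed
  have inj: "inj_on b J"
  proof (rule inj_onI)
    fix i j assume "i \<in> J" "j \<in> J" "b i = b j"
    then show "i = j" using e_b[of i i] e_b[of i j] by (auto split: if_splits)
  qed
  have "independent (b ` J)"
  proof -
    have "u v = 0" if u: "(\<Sum>v\<in>b ` J. u v *s v) = 0" and "v \<in> b ` J" for u v
    proof -
      obtain i where i: "i \<in> J" "v = b i" using \<open>v \<in> b ` J\<close> by blast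
      have "(\<Sum>j\<in>J. u (b j) *s b j) = 0" using u sum.reindex[OF inj, of "\<lambda>v. u v *s v"] by simp
      then have "u (b i) = e i 0" using e_comb[OF i(1), of "\<lambda>j. u (b j)"] by simp
      moreover have "e i 0 = 0" using e_scale[OF i(1) subspace_0[OF S], of 0] by simp
      ultimately show ?thesis using i by simp
    qed
    then show ?thesis using dependent_finite J by blast
  qed
  moreover have "S \<subseteq> span (b ` J)"
  proof
    fix x assume x: "x \<in> S"
    define y where "y = (\<Sum>j\<in>J. e j x *s b j)"
    have y: "y \<in> S" unfolding y_def using S b by (intro subspace_sum subspace_scale) auto
    have xy: "x - y = x + (-1) *s y" by simp
    have "e i (x - y) = 0" if i: "i \<in> J" for i
    proof -
      have "e i (x - y) = e i x + (-1) * e i y"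
        unfolding xy by (simp only: e_add[OF i x subspace_scale[OF S y]] e_scale[OF i y])
      moreover have "e i y = e i x" unfolding y_def by (rule e_comb[OF i])
      ultimately show ?thesis by simp
    qed
    then have "x = y" using e_zero[OF subspace_diff[OF S x y]] by simp
    moreover have "y \<in> span (b ` J)" unfolding y_def by (intro span_sum span_scale span_base) auto
    ultimately show "x \<in> span (b ` J)" by simp
  qed
  ultimately have "card (b ` J) = dim S" using b by (intro basis_card_eq_dim) auto
  then show ?thesis using card_image[OF inj] by simp
qed

lemma vector_space_pointwise_scale:
  "vector_space (\<lambda>(c::complex) (\<phi>::('a \<Rightarrow> complex) \<Rightarrow> ('a \<Rightarrow> complex)). \<lambda>f g. c * \<phi> f g)"
  by unfold_locales (simp_all add: fun_eq_iff algebra_simps)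

lemma rtrans_rtrans: "rtrans a (rtrans b f) = rtrans (mmul a b) f"
  by (simp add: rtrans_def mmul_assoc)
lemma rtrans_apply: "rtrans k f g = f (mmul g k)"
  by (simp add: rtrans_def)
lemma rtrans_Imat [simp]: "rtrans Imat f = f"
  by (simp add: rtrans_def)

section \<open>Valuations, residue fields and norms\<close>

locale unramified =
  fixes cj :: "'e::field \<Rightarrow> 'e" and v :: "'e \<Rightarrow> int" and eps s :: 'e
  assumes unram: "unram_setup cj v eps s"
begin

lemma cj_add: "cj (x + y) = cj x + cj y" using unram by (simp add: unram_setup_def)
lemma cj_mult: "cj (x * y) = cj x * cj y" using unram by (simp add: unram_setup_def)
lemma cj_one [simp]: "cj 1 = 1" using unram by (simp add: unram_setup_def)
lemma cj_cj [simp]: "cj (cj x) = x" using unram by (simp add: unram_setup_def)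
lemma v_mult: "x \<noteq> 0 \<Longrightarrow> y \<noteq> 0 \<Longrightarrow> v (x * y) = v x + v y"
  using unram by (simp add: unram_setup_def)
lemma v_add: "x \<noteq> 0 \<Longrightarrow> y \<noteq> 0 \<Longrightarrow> x + y \<noteq> 0 \<Longrightarrow> min (v x) (v y) \<le> v (x + y)"
  using unram by (simp add: unram_setup_def)
lemma v_cj: "x \<noteq> 0 \<Longrightarrow> v (cj x) = v x" using unram by (simp add: unram_setup_def)
lemma ex_uniformizer: "\<exists>\<pi>. \<pi> \<noteq> 0 \<and> cj \<pi> = \<pi> \<and> v \<pi> = 1" using unram by (simp add: unram_setup_def)
lemma finite_residue_reps: "\<exists>R. finite R \<and> (\<forall>x. inP v 0 x \<longrightarrow> (\<exists>r\<in>R. inP v 1 (x - r)))"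
  using unram by (simp add: unram_setup_def)
lemma two_nz: "(2::'e) \<noteq> 0" using unram by (simp add: unram_setup_def)
lemma v_two: "v 2 = 0" using unram by (simp add: unram_setup_def)
lemma eps_nz: "eps \<noteq> 0" using unram by (simp add: unram_setup_def)
lemma cj_eps: "cj eps = eps" using unram by (simp add: unram_setup_def)
lemma v_eps: "v eps = 0" using unram by (simp add: unram_setup_def)
lemma s_square: "s * s = eps" using unram by (simp add: unram_setup_def)
lemma cj_s: "cj s = - s" using unram by (simp add: unram_setup_def)

lemma cj_zero [simp]: "cj 0 = 0"
  by (metis add_cancel_right_right add_0 cj_add)
lemma cj_uminus: "cj (- x) = - cj x"
  using cj_add[of x "-x"] by (simp add: eq_neg_iff_add_eq_0 add.commute)
lemma cj_diff: "cj (x - y) = cj x - cj y"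
  using cj_add[of x "-y"] cj_uminus[of y] by simp
lemma cj_eq_0_iff [simp]: "cj x = 0 \<longleftrightarrow> x = 0"
  by (metis cj_cj cj_zero)
lemma cj_inverse: "cj (inverse x) = inverse (cj x)"
proof (cases "x = 0")
  case False
  have "cj (inverse x) * cj x = 1" using cj_mult[of "inverse x" x] False by simp
  then show ?thesis using False by (simp add: field_simps)
qed simp
lemma cj_divide: "cj (x / y) = cj x / cj y"
  by (simp add: divide_inverse cj_mult cj_inverse)
lemma cj_power: "cj (x ^ n) = cj x ^ n"
  by (induction n) (simp_all add: cj_mult)
lemma cj_two: "cj 2 = 2"
  by (metis cj_add cj_one one_add_one)

lemmas cj_simps = cj_add cj_mult cj_uminus cj_diff cj_inverse cj_divide cj_power cj_eps cj_s

lemma v_one [simp]: "v 1 = 0"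
  using v_mult[of 1 1] by simp
lemma v_minus_one: "v (-1) = 0"
  using v_mult[of "-1" "-1"] by simp
lemma v_uminus [simp]: "v (- x) = v x"
proof (cases "x = 0")
  case False
  then show ?thesis using v_mult[of "-1" x] v_minus_one by simp
qed simp
lemma v_inverse: "x \<noteq> 0 \<Longrightarrow> v (inverse x) = - v x"
  using v_mult[of x "inverse x"] by simp
lemma v_divide: "x \<noteq> 0 \<Longrightarrow> y \<noteq> 0 \<Longrightarrow> v (x / y) = v x - v y"
  by (simp add: divide_inverse v_mult v_inverse)
lemma v_power: "x \<noteq> 0 \<Longrightarrow> v (x ^ n) = int n * v x"
  by (induction n) (simp_all add: v_mult algebra_simps)

definition pi :: 'e where "pi = (SOME \<pi>. \<pi> \<noteq> 0 \<and> cj \<pi> = \<pi> \<and> v \<pi> = 1)"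
lemma pi: "pi \<noteq> 0" "cj pi = pi" "v pi = 1"
  using someI_ex[OF ex_uniformizer] unfolding pi_def by auto

lemma s_nz: "s \<noteq> 0" using s_square eps_nz by auto
lemma v_s: "v s = 0" using v_mult[of s s] s_square v_eps s_nz by simp

abbreviation P :: "nat \<Rightarrow> 'e \<Rightarrow> bool" where "P n x \<equiv> inP v n x"
abbreviation Oi :: "'e \<Rightarrow> bool" where "Oi x \<equiv> inP v 0 x"
definition unit :: "'e \<Rightarrow> bool" where "unit x \<longleftrightarrow> x \<noteq> 0 \<and> v x = 0"

lemma P_0 [simp]: "P n 0" by (simp add: inP_def)
lemma P_add: assumes "P n x" "P n y" shows "P n (x + y)"
proof (cases "x = 0 \<or> y = 0 \<or> x + y = 0")
  case True then show ?thesis using assms by (auto simp: inP_def)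
next
  case False
  then have "min (v x) (v y) \<le> v (x + y)" using v_add[of x y] by blast
  moreover have "int n \<le> v x" "int n \<le> v y" using assms False by (auto simp: inP_def)
  ultimately show ?thesis by (auto simp: inP_def min_def split: if_splits)
qed
lemma P_uminus_iff [simp]: "P n (- x) = P n x" by (simp add: inP_def)
lemma P_diff: "P n x \<Longrightarrow> P n y \<Longrightarrow> P n (x - y)"
  using P_add[of n x "-y"] by simp
lemma P_diff_commute: "P n (x - y) = P n (y - x)"
  by (metis P_uminus_iff minus_diff_eq)
lemma P_diff_trans: "P n (x - y) \<Longrightarrow> P n (y - z) \<Longrightarrow> P n (x - z)"
  using P_add[of n "x - y" "y - z"] by simp
lemma P_mult: "P n x \<Longrightarrow> P m y \<Longrightarrow> P (n + m) (x * y)"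
  unfolding inP_def by (cases "x = 0"; cases "y = 0") (auto simp: v_mult)
lemma O_mult: "Oi x \<Longrightarrow> Oi y \<Longrightarrow> Oi (x * y)"
  using P_mult[of 0 x 0 y] by simp
lemma P_multO: "P n x \<Longrightarrow> Oi y \<Longrightarrow> P n (x * y)"
  using P_mult[of n x 0 y] by simp
lemma P_Omult: "Oi x \<Longrightarrow> P n y \<Longrightarrow> P n (x * y)"
  using P_mult[of 0 x n y] by simp
lemma P_mono: "m \<le> n \<Longrightarrow> P n x \<Longrightarrow> P m x"
  unfolding inP_def by auto
lemma P_O: "P n x \<Longrightarrow> Oi x" using P_mono[of 0 n] by simp
lemma P_cj: "P n (cj x) = P n x"
  unfolding inP_def by (cases "x = 0") (auto simp: v_cj)
lemma O_1 [simp]: "Oi 1" by (simp add: inP_def)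
lemma O_consts: "Oi s" "Oi eps" "Oi pi" "Oi 2"
  by (simp_all add: inP_def v_s v_eps pi v_two)

lemma unit_O: "unit x \<Longrightarrow> Oi x" by (simp add: unit_def inP_def)
lemma unit_nz: "unit x \<Longrightarrow> x \<noteq> 0" by (simp add: unit_def)
lemma unit_inverse: "unit x \<Longrightarrow> unit (inverse x)" by (simp add: unit_def v_inverse)
lemma unit_mult: "unit x \<Longrightarrow> unit y \<Longrightarrow> unit (x * y)" by (simp add: unit_def v_mult)
lemma unit_cj: "unit x \<Longrightarrow> unit (cj x)" by (simp add: unit_def v_cj)
lemma unit_1 [simp]: "unit 1" by (simp add: unit_def)
lemma unit_consts: "unit s" "unit eps" "unit 2"
  by (simp_all add: unit_def v_s s_nz v_eps eps_nz two_nz v_two)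
lemma P_div_unit: "P n x \<Longrightarrow> unit y \<Longrightarrow> P n (x / y)"
  using P_multO[of n x "inverse y"] unit_inverse[of y] unit_O by (simp add: divide_inverse)
lemma unit_factor: "Oi x \<Longrightarrow> Oi y \<Longrightarrow> unit (x * y) \<Longrightarrow> unit x"
  unfolding unit_def inP_def by (auto simp: v_mult)
lemma P1_if_not_unit: "Oi x \<Longrightarrow> \<not> unit x \<Longrightarrow> P 1 x"
  unfolding unit_def inP_def by auto
lemma unit_not_P1: "unit x \<Longrightarrow> \<not> P 1 x"
  unfolding unit_def inP_def by auto

lemma unit_add_P1: assumes "unit x" "P 1 y" shows "unit (x + y)"
proof -
  have O: "Oi (x + y)" using assms P_add[of 0 x y] P_O unit_O by blast
  have "\<not> P 1 ((x + y) - y)" using assms(1) unit_not_P1 by simp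
  then have "\<not> P 1 (x + y)" using P_diff assms(2) by blast
  then show ?thesis using P1_if_not_unit O by blast
qed
lemma unit_if_P1_diff: "unit x \<Longrightarrow> P 1 (y - x) \<Longrightarrow> unit y"
  using unit_add_P1[of x "y - x"] by simp
lemma unit_if_P_diff_1: "1 \<le> n \<Longrightarrow> P n (a - 1) \<Longrightarrow> unit a"
  using unit_if_P1_diff[OF unit_1] P_mono[of 1 n] by blast

lemma P_pi_power: "P n (pi ^ n)"
  by (simp add: inP_def v_power pi)
lemma O_div_pi_power: assumes "P n x" shows "Oi (x / pi ^ n)"
  using assms pi unfolding inP_def by (cases "x = 0") (auto simp: v_divide v_power)

lemma P1_prime: assumes "P 1 (a * b)" "Oi a" "Oi b" shows "P 1 a \<or> P 1 b"
  using assms unfolding inP_def by (cases "a = 0"; cases "b = 0") (auto simp: v_mult)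

lemma Tmem_iff: "Tmem v n a \<longleftrightarrow> unit a \<and> P n (a - 1)"
  using unit_if_P_diff_1[of n a] unit_O[of a] P_diff[OF _ O_1, of a]
  by (cases n) (auto simp: Tmem_def unit_def)

lemma Tmem_mono: "Tmem v n a \<Longrightarrow> m \<le> n \<Longrightarrow> Tmem v m a"
  using P_mono by (auto simp: Tmem_iff)

lemma has_depth_trivial_above:
  "has_depth Q v chi r \<Longrightarrow> r < n \<Longrightarrow> Q a \<Longrightarrow> Tmem v n a \<Longrightarrow> chi a = 1"
  unfolding has_depth_def using Tmem_mono[of n a "Suc r"] Tmem_mono[of n a 0] by auto

lemma has_depth_nontrivial:
  "has_depth Q v chi r \<Longrightarrow> \<not> (r = 0 \<and> (\<forall>a. Q a \<and> Tmem v 0 a \<longrightarrow> chi a = 1)) \<Longrightarrow>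
    \<exists>a. Q a \<and> Tmem v r a \<and> chi a \<noteq> 1"
  unfolding has_depth_def by blast

lemma finite_reps_mod_P: "\<exists>R. finite R \<and> (\<forall>x. Oi x \<longrightarrow> (\<exists>r\<in>R. P n (x - r)))"
proof (induction n)
  case 0
  show ?case by (rule exI[of _ "{0}"]) simp
next
  case (Suc n)
  then obtain S where S: "finite S" "\<forall>x. Oi x \<longrightarrow> (\<exists>r\<in>S. P n (x - r))" by blast
  obtain R where R: "finite R" "\<forall>x. Oi x \<longrightarrow> (\<exists>r\<in>R. P 1 (x - r))"
    using finite_residue_reps by blast
  let ?T = "(\<lambda>(r, t). r + pi * t) ` (R \<times> S)"
  have "\<exists>q\<in>?T. P (Suc n) (x - q)" if x: "Oi x" for x
  proof -
    obtain r where r: "r \<in> R" "P 1 (x - r)" using R x by blast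
    define y where "y = (x - r) / pi"
    have y: "Oi y" using O_div_pi_power[OF r(2)] by (simp add: y_def)
    obtain t where t: "t \<in> S" "P n (y - t)" using S y by blast
    have "x - (r + pi * t) = pi * (y - t)" using pi by (simp add: y_def field_simps)
    moreover have "P (Suc n) (pi * (y - t))"
      using P_mult[OF _ t(2), of 1 pi] pi by (simp add: inP_def)
    ultimately show ?thesis using r t by force
  qed
  moreover have "finite ?T" using R S by simp
  ultimately show ?case by blast
qed

text \<open>Averaging a representative with its conjugate gives representatives in \<open>F\<close>;
  this is where the odd residue characteristic (\<open>v 2 = 0\<close>) enters.\<close>

lemma finite_F_reps_mod_P:
  "\<exists>R. finite R \<and> (\<forall>r\<in>R. cj r = r \<and> Oi r) \<and> (\<forall>x. Oi x \<and> cj x = x \<longrightarrow> (\<exists>r\<in>R. P n (x - r)))"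
proof -
  obtain R where R: "finite R" "\<forall>x. Oi x \<longrightarrow> (\<exists>r\<in>R. P n (x - r))"
    using finite_reps_mod_P by blast
  define avg where "avg r = (r + cj r) / 2" for r
  define R' where "R' = avg ` {r\<in>R. \<exists>x. Oi x \<and> P n (x - r)}"
  have fin: "finite R'" using R(1) by (simp add: R'_def)
  have cj_avg: "cj (avg r) = avg r" for r
    by (simp add: avg_def cj_simps cj_two add.commute)
  have O_avg: "Oi (avg r)" if "Oi x" "P n (x - r)" for x r
  proof -
    have "Oi r" using that P_O[OF that(2)] P_diff[of 0 x "x - r"] by simp
    then show ?thesis
      unfolding avg_def using P_div_unit[of 0 "r + cj r" 2] unit_consts P_add[of 0 r "cj r"] P_cj
      by simp
  qed
  have approx: "\<exists>q\<in>R'. P n (x - q)" if x: "Oi x" "cj x = x" for x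
  proof -
    obtain r where r: "r \<in> R" "P n (x - r)" using R x by blast
    have "P n (cj (x - r))" using r P_cj by simp
    then have c: "P n (x - cj r)" using x by (simp add: cj_diff)
    have eq: "x - avg r = ((x - r) + (x - cj r)) / 2"
      using two_nz by (simp add: avg_def field_simps)
    have "P n (x - avg r)" unfolding eq by (rule P_div_unit[OF P_add[OF r(2) c] unit_consts(3)])
    moreover have "avg r \<in> R'" using r x unfolding R'_def by blast
    ultimately show ?thesis by blast
  qed
  have "\<forall>r\<in>R'. cj r = r \<and> Oi r" unfolding R'_def using cj_avg O_avg by blast
  then show ?thesis using fin approx by blast
qed

definition RF :: "'e set" where
  "RF = (SOME R. finite R \<and> (\<forall>r\<in>R. cj r = r \<and> Oi r) \<and>
     (\<forall>x. Oi x \<and> cj x = x \<longrightarrow> (\<exists>r\<in>R. P 1 (x - r))))"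

lemma RF: "finite RF" "\<And>r. r \<in> RF \<Longrightarrow> cj r = r \<and> Oi r"
  "\<And>x. Oi x \<Longrightarrow> cj x = x \<Longrightarrow> \<exists>r\<in>RF. P 1 (x - r)"
  using someI_ex[OF finite_F_reps_mod_P[of 1]] unfolding RF_def by blast+

text \<open>\<open>red x\<close> is the chosen representative of the residue class of \<open>x \<in> O\<^sub>F\<close>, so that
  \<open>redF\<close> is a copy of the residue field of \<open>F\<close>.\<close>

definition red :: "'e \<Rightarrow> 'e" where "red x = (SOME r. r \<in> RF \<and> P 1 (x - r))"
definition redF :: "'e set" where "redF = red ` {x. Oi x \<and> cj x = x}"

lemma red: assumes "Oi x" "cj x = x" shows "red x \<in> RF" "P 1 (x - red x)"
proof -
  have "\<exists>r. r \<in> RF \<and> P 1 (x - r)" using RF(3)[OF assms] by blast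
  from someI_ex[OF this] show "red x \<in> RF" "P 1 (x - red x)" unfolding red_def by blast+
qed

lemma red_eq_iff:
  assumes "Oi x" "cj x = x" "Oi y" "cj y = y"
  shows "red x = red y \<longleftrightarrow> P 1 (x - y)"
proof
  assume "red x = red y"
  then show "P 1 (x - y)"
    using red(2)[OF assms(1,2)] red(2)[OF assms(3,4)] P_diff_trans P_diff_commute by metis
next
  assume "P 1 (x - y)"
  then have "r \<in> RF \<and> P 1 (x - r) \<longleftrightarrow> r \<in> RF \<and> P 1 (y - r)" for r
    using P_diff_trans P_diff_commute by blast
  then show "red x = red y" unfolding red_def by simp
qed

lemma finite_redF: "finite redF"
  using RF(1) red(1) finite_subset[of redF RF] unfolding redF_def by auto

lemma redF_elem: "q \<in> redF \<Longrightarrow> Oi q \<and> cj q = q"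
  unfolding redF_def using red(1) RF(2) by auto

lemma red_in_redF: "Oi x \<Longrightarrow> cj x = x \<Longrightarrow> red x \<in> redF"
  unfolding redF_def by auto

lemma red_idem: assumes "q \<in> redF" shows "red q = q"
proof -
  obtain x where x: "Oi x" "cj x = x" "q = red x" using assms unfolding redF_def by auto
  have "P 1 (q - x)" using red(2)[OF x(1,2)] x(3) P_diff_commute by metis
  then have "red q = red x" using red_eq_iff[of q x] x(1,2) redF_elem[OF assms] by blast
  then show ?thesis using x(3) by simp
qed

lemma red_affine_square_eq_iff:
  assumes c: "unit c" "cj c = c" and w: "Oi w" "cj w = w" and q: "q \<in> redF" "q' \<in> redF"
  shows "red (w + c * q' * q') = red (w + c * q * q) \<longleftrightarrow> red q' = red q \<or> red q' = red (- q)"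
proof -
  have q': "Oi q" "cj q = q" "Oi q'" "cj q' = q'" using redF_elem q by auto
  have O: "Oi (w + c * x * x)" "cj (w + c * x * x) = w + c * x * x" if "Oi x" "cj x = x" for x
    using that w c unit_O[OF c(1)] by (auto simp: cj_simps intro!: P_add O_mult)
  have "red (w + c * q' * q') = red (w + c * q * q) \<longleftrightarrow> P 1 ((w + c * q' * q') - (w + c * q * q))"
    using q' by (intro red_eq_iff O)
  also have "\<dots> \<longleftrightarrow> P 1 (c * ((q' - q) * (q' - (- q))))"
    by (rule arg_cong[where f = "P 1"]) (simp add: algebra_simps)
  also have "\<dots> \<longleftrightarrow> P 1 ((q' - q) * (q' - (- q)))"
  proof
    assume "P 1 (c * ((q' - q) * (q' - (- q))))"
    from P_div_unit[OF this c(1)] show "P 1 ((q' - q) * (q' - (- q)))"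
      using unit_nz[OF c(1)] by simp
  qed (rule P_Omult[OF unit_O[OF c(1)]])
  also have "\<dots> \<longleftrightarrow> P 1 (q' - q) \<or> P 1 (q' - (- q))"
  proof -
    have "Oi (q' - q)" "Oi (q' - (- q))" using q' P_add[of 0 q' q] P_diff[of 0 q' q] by auto
    then show ?thesis using P1_prime[of "q' - q" "q' - (- q)"] P_multO P_Omult by blast
  qed
  also have "\<dots> \<longleftrightarrow> red q' = red q \<or> red q' = red (- q)"
    using red_eq_iff[of q' q] red_eq_iff[of q' "- q"] q' by (simp add: cj_uminus)
  finally show ?thesis .
qed

text \<open>Over the residue field, \<open>q \<mapsto> w + c q\<^sup>2\<close> is at most two-to-one and injective at
  \<open>0\<close>, so it takes more than half of all values.\<close>

lemma card_affine_square_values: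
  assumes c: "unit c" "cj c = c" and w: "Oi w" "cj w = w"
  shows "card redF + 1 \<le> 2 * card ((\<lambda>q. red (w + c * q * q)) ` redF)"
proof (rule card_le_twice_card_image[OF finite_redF])
  let ?f = "\<lambda>q. red (w + c * q * q)"
  have fibre: "{q'\<in>redF. ?f q' = ?f q} \<subseteq> {q, red (- q)}" if "q \<in> redF" for q
    using red_affine_square_eq_iff[OF c w that] red_idem that by auto
  show "card {q'\<in>redF. ?f q' = ?f q} \<le> 2" if "q \<in> redF" for q
    using card_mono[OF _ fibre[OF that]] card_insert_le_m1[of 2 "{red (- q)}" q] by simp
  show r0: "red 0 \<in> redF" using red_in_redF by simp
  have "red (- red 0) = red 0"
    using red_eq_iff[of "- red 0" 0] red(2)[of 0] redF_elem[OF r0] by (simp add: cj_uminus)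
  then show "{q'\<in>redF. ?f q' = ?f (red 0)} = {red 0}"
    using fibre[OF r0] r0 red_idem by auto
qed

text \<open>Every unit of \<open>O\<^sub>F\<close> is a norm modulo \<open>p\<close>: the values of \<open>x\<^sup>2\<close> and of
  \<open>w + \<epsilon> y\<^sup>2\<close> on the residue field must meet, and then \<open>(x + s y) cj (x + s y) = x\<^sup>2 - \<epsilon> y\<^sup>2\<close>.\<close>

lemma norm_surj_mod_p:
  assumes w: "unit w" "cj w = w"
  shows "\<exists>a. unit a \<and> P 1 (a * cj a - w)"
proof -
  define f1 where "f1 = (\<lambda>q. red (0 + 1 * q * q))"
  define f2 where "f2 = (\<lambda>q. red (w + eps * q * q))"
  have "card redF + 1 \<le> 2 * card (f1 ` redF)"
    unfolding f1_def by (rule card_affine_square_values) simp_all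
  moreover have "card redF + 1 \<le> 2 * card (f2 ` redF)"
    unfolding f2_def using unit_consts cj_eps w unit_O by (intro card_affine_square_values) auto
  moreover have "f1 ` redF \<subseteq> redF" "f2 ` redF \<subseteq> redF"
    unfolding f1_def f2_def using redF_elem w unit_O O_consts
    by (auto intro!: red_in_redF P_add O_mult simp: cj_simps)
  then have "card (f1 ` redF \<union> f2 ` redF) \<le> card redF"
    using finite_redF by (intro card_mono) auto
  moreover have "card (f1 ` redF) + card (f2 ` redF) =
      card (f1 ` redF \<union> f2 ` redF) + card (f1 ` redF \<inter> f2 ` redF)"
    using finite_redF by (intro card_Un_Int) auto
  ultimately have "card (f1 ` redF \<inter> f2 ` redF) > 0" by linarith
  then have "f1 ` redF \<inter> f2 ` redF \<noteq> {}" by (metis card.empty less_irrefl)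
  then obtain x y where xy: "x \<in> redF" "y \<in> redF" "f1 x = f2 y" by auto
  have x: "Oi x" "cj x = x" and y: "Oi y" "cj y = y" using redF_elem xy by auto
  have "Oi (x * x)" "cj (x * x) = x * x" using x by (auto simp: cj_mult intro: O_mult)
  moreover have "Oi (w + eps * y * y)" "cj (w + eps * y * y) = w + eps * y * y"
    using y w unit_O O_consts by (auto simp: cj_simps intro!: P_add O_mult)
  ultimately have close: "P 1 (x * x - (w + eps * y * y))"
    using xy(3) red_eq_iff unfolding f1_def f2_def by simp
  define a where "a = x + s * y"
  have "a * cj a = x * x - eps * y * y"
    unfolding a_def using x y by (simp add: cj_simps algebra_simps s_square[symmetric])
  then have "a * cj a - w = x * x - (w + eps * y * y)" by (simp add: algebra_simps)
  then have n: "P 1 (a * cj a - w)" using close by (simp only:)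
  have "Oi a" unfolding a_def using x y O_consts by (auto intro!: P_add O_mult)
  moreover have "unit (a * cj a)" using unit_if_P1_diff[OF w(1)] n by blast
  ultimately have "unit a" using unit_factor P_cj by blast
  then show ?thesis using n by blast
qed

text \<open>Newton iteration: if \<open>N(a) = w (1 + 2h)\<close> with \<open>h \<in> p\<^sup>n\<close>, then
  \<open>N(a (1 - h)) - w = w h\<^sup>2 (2h - 3) \<in> p\<^sup>2\<^sup>n\<close>.\<close>

lemma norm_surj_mod_P:
  assumes w: "unit w" "cj w = w"
  shows "\<exists>a. unit a \<and> P (Suc m) (a * cj a - w)"
proof (induction m)
  case 0
  then show ?case using norm_surj_mod_p[OF w] by simp
next
  case (Suc m)
  then obtain a where a: "unit a" "P (Suc m) (a * cj a - w)" by blast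
  define h where "h = (a * cj a - w) / (2 * w)"
  have h: "P (Suc m) h"
    unfolding h_def using P_div_unit[OF a(2) unit_mult[OF unit_consts(3) w(1)]] .
  have cj_h: "cj h = h" unfolding h_def using w by (simp add: cj_simps cj_two mult.commute)
  have u: "unit (1 - h)"
    using unit_add_P1[of 1 "- h"] h P_mono[of 1 "Suc m"] by simp
  have N: "a * cj a = w * (1 + 2 * h)"
    unfolding h_def using unit_nz[OF w(1)] two_nz by (simp add: field_simps)
  have "(a * (1 - h)) * cj (a * (1 - h)) = (a * cj a) * ((1 - h) * (1 - h))"
    by (simp add: cj_simps cj_h algebra_simps)
  then have "(a * (1 - h)) * cj (a * (1 - h)) - w = w * (h * h) * (2 * h - 3)"
    unfolding N by (simp add: algebra_simps)
  moreover have "P (Suc (Suc m)) (w * (h * h) * (2 * h - 3))"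
  proof -
    have "P (Suc (Suc m)) (h * h)" using P_mono[OF _ P_mult[OF h h]] by simp
    moreover have "Oi (2 * h - 3)"
      using P_diff P_add[OF O_consts(4) O_1] O_mult[OF O_consts(4) P_O[OF h]] by simp
    ultimately show ?thesis using unit_O[OF w(1)] by (metis P_Omult P_multO mult.assoc)
  qed
  ultimately show ?case using unit_mult[OF a(1) u] by metis
qed

lemma trace_zero_factor:
  assumes "cj a = a" "P j (a - 1)"
  shows "\<exists>z. Oi z \<and> cj z = - z \<and> z * (s * pi ^ j) = 1 - a"
proof (intro exI conjI)
  define z where "z = s * ((1 - a) / (eps * pi ^ j))"
  have "Oi ((1 - a) / pi ^ j / eps)"
    using P_div_unit[OF O_div_pi_power unit_consts(2)] assms(2) P_diff_commute by blast
  then have "Oi ((1 - a) / (eps * pi ^ j))" by (simp add: mult.commute)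
  then show "Oi z" unfolding z_def by (rule P_Omult[OF O_consts(1)])
  show "cj z = - z" unfolding z_def using assms(1) by (simp add: cj_simps pi(2))
  show "z * (s * pi ^ j) = 1 - a" unfolding z_def using pi(1) eps_nz
    by (simp add: field_simps s_square[symmetric])
qed

lemma P_unit_mult_diff_norm:
  assumes "unit \<alpha>" "unit a" "P n (\<alpha> * cj \<alpha> - inverse a)"
  shows "P n (\<alpha> * a - inverse (cj \<alpha>))"
proof -
  have "inverse (cj \<alpha>) * a * (\<alpha> * cj \<alpha> - inverse a) = \<alpha> * a - inverse (cj \<alpha>)"
    using unit_nz[OF assms(1)] unit_nz[OF assms(2)] by (simp add: field_simps)
  moreover have "Oi (inverse (cj \<alpha>) * a)"
    using unit_O[OF unit_mult[OF unit_inverse[OF unit_cj[OF assms(1)]] assms(2)]] .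
  ultimately show ?thesis using P_Omult[OF _ assms(3)] by metis
qed

section \<open>The unitary group and its subgroups\<close>

definition lower_unip :: "'e \<Rightarrow> 'e mat2" where "lower_unip y = M2 1 0 y 1"
definition upper_unip :: "'e \<Rightarrow> 'e mat2" where "upper_unip z = M2 1 z 0 1"
definition torus :: "'e \<Rightarrow> 'e mat2" where "torus a = M2 a 0 0 (inverse (cj a))"

text \<open>On \<open>G\<close> the inverse is \<open>w (cjT g) w\<close>, which is defined on all matrices.\<close>

definition ginv :: "'e mat2 \<Rightarrow> 'e mat2" where
  "ginv g = (case g of M2 a b c e \<Rightarrow> M2 (cj e) (cj b) (cj c) (cj a))"

lemma ginv_M2 [simp]: "ginv (M2 a b c e) = M2 (cj e) (cj b) (cj c) (cj a)"
  by (simp add: ginv_def)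
lemma ginv_ginv [simp]: "ginv (ginv g) = g"
  by (cases g) simp
lemma ginv_Imat [simp]: "ginv Imat = Imat"
  by (simp add: Imat_def)
lemma ginv_mmul: "ginv (mmul a b) = mmul (ginv b) (ginv a)"
  by (cases a; cases b) (simp add: cj_add cj_mult algebra_simps)

abbreviation G :: "'e mat2 \<Rightarrow> bool" where "G g \<equiv> inG cj g"

lemma G_iff: "G (M2 a b c e) \<longleftrightarrow> a*e - b*c \<noteq> 0 \<and> cj a * c + cj c * a = 0 \<and>
   cj a * e + cj c * b = 1 \<and> cj b * c + cj e * a = 1 \<and> cj b * e + cj e * b = 0"
  by (auto simp: inG_def wmat_def)

lemma ginv_left: "G g \<Longrightarrow> mmul (ginv g) g = Imat"
  by (cases g) (auto simp: G_iff Imat_def algebra_simps)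
lemma ginv_right: "G g \<Longrightarrow> mmul g (ginv g) = Imat"
  using mmul_inverse_commute ginv_left by blast

lemma G_bottom_row_isotropic: "G (M2 a b c e) \<Longrightarrow> c * cj e + e * cj c = 0"
  using ginv_right[of "M2 a b c e"] by (simp add: Imat_def)

lemma cjT_mmul: "cjT cj (mmul g h) = mmul (cjT cj h) (cjT cj g)"
  by (cases g; cases h) (simp add: cj_add cj_mult algebra_simps)

lemma G_mmul: assumes "G g" "G h" shows "G (mmul g h)"
proof -
  have g: "mmul (cjT cj g) (mmul wmat g) = wmat" and h: "mmul (cjT cj h) (mmul wmat h) = wmat"
    using assms by (auto simp: inG_def)
  have "mmul (cjT cj (mmul g h)) (mmul wmat (mmul g h))
      = mmul (cjT cj h) (mmul (mmul (cjT cj g) (mmul wmat g)) h)"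
    by (simp add: cjT_mmul mmul_assoc)
  also have "\<dots> = wmat" using g h by simp
  finally show ?thesis using assms by (simp add: inG_def mdet_mmul)
qed

lemma G_ginv: assumes "G g" shows "G (ginv g)"
proof -
  obtain a b c e where g: "g = M2 a b c e" by (cases g)
  have "a*e - b*c \<noteq> 0" using assms g by (simp add: G_iff)
  then have "cj e * cj a - cj b * cj c \<noteq> 0"
    by (metis cj_diff cj_eq_0_iff cj_mult mult.commute)
  moreover have "a * cj e + b * cj c = 1" "a * cj b + b * cj a = 0" "c * cj e + e * cj c = 0"
    "c * cj b + e * cj a = 1"
    using ginv_right[OF assms] g by (auto simp: Imat_def)
  ultimately show ?thesis using g by (simp add: G_iff algebra_simps)
qed

lemma G_Imat: "G Imat" unfolding inG_def Imat_def wmat_def by simp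

lemma G_lower_unip: "G (lower_unip y) \<longleftrightarrow> y + cj y = 0"
  by (auto simp: lower_unip_def G_iff add.commute)
lemma G_upper_unip: "G (upper_unip z) \<longleftrightarrow> z + cj z = 0"
  by (auto simp: upper_unip_def G_iff add.commute)
lemma G_torus: "G (torus a) \<longleftrightarrow> a \<noteq> 0"
  by (auto simp: torus_def G_iff cj_inverse)

lemma mmul_ginv_cancel [simp]:
  "G a \<Longrightarrow> mmul (ginv a) (mmul a g) = g" "G a \<Longrightarrow> mmul a (mmul (ginv a) g) = g"
  "G a \<Longrightarrow> mmul (mmul g a) (ginv a) = g" "G a \<Longrightarrow> mmul (mmul g (ginv a)) a = g"
  by (simp_all add: mmul_assoc[symmetric] ginv_left ginv_right)
    (simp_all add: mmul_assoc ginv_left ginv_right)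

lemma G_of_mmul: "G (mmul g k) \<Longrightarrow> G k \<Longrightarrow> G g"
  using G_mmul[of "mmul g k" "ginv k"] G_ginv[of k] by simp

definition integral_mat :: "'e mat2 \<Rightarrow> bool" where
  "integral_mat g \<longleftrightarrow> (\<forall>x\<in>entries g. Oi x)"

lemma integral_mat_M2 [simp]: "integral_mat (M2 a b c e) \<longleftrightarrow> Oi a \<and> Oi b \<and> Oi c \<and> Oi e"
  by (simp add: integral_mat_def)
lemma integral_mat_mmul: "integral_mat g \<Longrightarrow> integral_mat h \<Longrightarrow> integral_mat (mmul g h)"
  by (cases g; cases h) (auto intro!: P_add O_mult)
lemma integral_mat_ginv: "integral_mat g \<Longrightarrow> integral_mat (ginv g)"
  by (cases g) (simp add: P_cj)

abbreviation K :: "'e mat2 set" where "K \<equiv> Kgrp cj v"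

lemma K_iff: "g \<in> K \<longleftrightarrow> G g \<and> integral_mat g"
  by (simp add: Kgrp_def integral_mat_def)
lemma K_G: "k \<in> K \<Longrightarrow> G k" by (simp add: K_iff)
lemma K_mmul: "g \<in> K \<Longrightarrow> h \<in> K \<Longrightarrow> mmul g h \<in> K"
  by (simp add: K_iff G_mmul integral_mat_mmul)
lemma K_ginv: "g \<in> K \<Longrightarrow> ginv g \<in> K"
  by (simp add: K_iff G_ginv integral_mat_ginv)
lemma K_Imat: "Imat \<in> K" unfolding K_iff using G_Imat by (simp add: Imat_def)

lemma K_det_unit: assumes "k \<in> K" shows "unit (mdet k)"
proof -
  have k: "G k" "integral_mat k" using assms by (auto simp: K_iff)
  have "mdet k * mdet (ginv k) = 1"
    using mdet_mmul[of k "ginv k"] ginv_right[OF k(1)] by (simp add: Imat_def)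
  moreover have "mdet (ginv k) = cj (mdet k)" by (cases k) (simp add: cj_simps mult.commute)
  moreover have "Oi (mdet k)" using k(2) by (cases k) (auto intro!: P_diff O_mult)
  ultimately show ?thesis by (metis unit_factor P_cj unit_1)
qed

definition congP :: "nat \<Rightarrow> 'e mat2 \<Rightarrow> 'e mat2 \<Rightarrow> bool" where
  "congP n g h \<longleftrightarrow> (\<forall>x\<in>entries (msub g h). P n x)"

lemma congP_M2 [simp]: "congP n (M2 a b c e) (M2 a' b' c' e') \<longleftrightarrow>
   P n (a - a') \<and> P n (b - b') \<and> P n (c - c') \<and> P n (e - e')"
  by (simp add: congP_def)

lemma congP_refl: "congP n g g" by (cases g) simp
lemma congP_sym: "congP n g h \<Longrightarrow> congP n h g"
  by (cases g; cases h) (simp add: P_diff_commute)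
lemma congP_trans: "congP n g h \<Longrightarrow> congP n h k \<Longrightarrow> congP n g k"
  by (cases g; cases h; cases k) (auto intro: P_diff_trans)

lemma P_linear_comb_diff:
  "P n (p - q) \<Longrightarrow> P n (p' - q') \<Longrightarrow> Oi a \<Longrightarrow> Oi b \<Longrightarrow> P n ((p*a + p'*b) - (q*a + q'*b))"
  "P n (p - q) \<Longrightarrow> P n (p' - q') \<Longrightarrow> Oi a \<Longrightarrow> Oi b \<Longrightarrow> P n ((a*p + b*p') - (a*q + b*q'))"
proof -
  assume h: "P n (p - q)" "P n (p' - q')" "Oi a" "Oi b"
  have "(p*a + p'*b) - (q*a + q'*b) = (p - q)*a + (p' - q')*b"
    "(a*p + b*p') - (a*q + b*q') = (p - q)*a + (p' - q')*b" by (simp_all add: algebra_simps)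
  then show "P n ((p*a + p'*b) - (q*a + q'*b))" "P n ((a*p + b*p') - (a*q + b*q'))"
    using h by (simp_all add: P_add P_multO)
qed

lemma congP_mmul_right: "congP n X Y \<Longrightarrow> integral_mat A \<Longrightarrow> congP n (mmul X A) (mmul Y A)"
  by (cases X; cases Y; cases A) (simp add: P_linear_comb_diff)
lemma congP_mmul_left: "congP n X Y \<Longrightarrow> integral_mat A \<Longrightarrow> congP n (mmul A X) (mmul A Y)"
  by (cases X; cases Y; cases A) (simp add: P_linear_comb_diff)

abbreviation Kd :: "nat \<Rightarrow> 'e mat2 set" where "Kd n \<equiv> Kn cj v n"

lemma Kd_iff: "k \<in> Kd n \<longleftrightarrow> k \<in> K \<and> congP n k Imat"
  by (simp add: Kn_def congP_def)
lemma Kd_K: "k \<in> Kd n \<Longrightarrow> k \<in> K" by (simp add: Kd_iff)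
lemma Kd_Imat: "Imat \<in> Kd n" by (simp add: Kd_iff K_Imat congP_refl)

lemma Kd_mmul: assumes "k \<in> Kd n" "h \<in> Kd n" shows "mmul k h \<in> Kd n"
proof -
  have "congP n (mmul k h) (mmul k Imat)"
    using assms by (intro congP_mmul_left) (auto simp: Kd_iff K_iff)
  then show ?thesis using assms congP_trans K_mmul by (auto simp: Kd_iff)
qed

lemma Kd_conj: assumes "m \<in> K" "k \<in> Kd n" shows "mmul m (mmul k (ginv m)) \<in> Kd n"
proof -
  have "congP n (mmul m k) (mmul m Imat)"
    using assms by (intro congP_mmul_left) (auto simp: Kd_iff K_iff)
  then have "congP n (mmul (mmul m k) (ginv m)) (mmul m (ginv m))"
    using assms by (intro congP_mmul_right) (auto simp: K_iff integral_mat_ginv)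
  then have "congP n (mmul m (mmul k (ginv m))) Imat"
    using assms ginv_right by (simp add: mmul_assoc K_iff)
  then show ?thesis using assms by (simp add: Kd_iff K_mmul K_ginv Kd_K)
qed

lemma Kd_conj': "m \<in> K \<Longrightarrow> k \<in> Kd n \<Longrightarrow> mmul (ginv m) (mmul k m) \<in> Kd n"
  using Kd_conj[OF K_ginv] by simp

lemma Kd_ginv: assumes "k \<in> Kd n" shows "ginv k \<in> Kd n"
proof -
  have "congP n (mmul (ginv k) k) (mmul (ginv k) Imat)"
    using assms by (intro congP_mmul_left) (auto simp: Kd_iff K_iff integral_mat_ginv)
  then have "congP n Imat (ginv k)" using assms ginv_left by (simp add: Kd_iff K_iff)
  then show ?thesis using assms K_ginv congP_sym by (auto simp: Kd_iff)
qed

abbreviation B :: "'e mat2 set" where "B \<equiv> Bgrp cj"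

lemma B_iff: "b \<in> B \<longleftrightarrow> G b \<and> ent21 b = 0" by (simp add: Bgrp_def)
lemma B_G: "b \<in> B \<Longrightarrow> G b" by (simp add: B_iff)
lemma B_mmul: "b \<in> B \<Longrightarrow> b' \<in> B \<Longrightarrow> mmul b b' \<in> B"
  by (cases b; cases b') (auto simp: B_iff G_mmul simp del: mmul.simps, auto)
lemma B_ginv: "b \<in> B \<Longrightarrow> ginv b \<in> B"
  by (cases b) (auto simp: B_iff G_ginv simp del: ginv_M2, simp)
lemma B_Imat: "Imat \<in> B" unfolding B_iff using G_Imat by (simp add: Imat_def)
lemma B_M2: "b \<in> B \<Longrightarrow> \<exists>a x e. b = M2 a x 0 e"
  by (cases b) (auto simp: B_iff)
lemma B_entries: assumes "M2 a x 0 e \<in> B" shows "a \<noteq> 0" "e = inverse (cj a)"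
  using assms by (auto simp: B_iff G_iff field_simps)
lemma ent11_mmul_B: "ent21 b' = 0 \<Longrightarrow> ent11 (mmul b b') = ent11 b * ent11 b'"
  by (cases b; cases b') simp
lemma ent11_B_nz: "b \<in> B \<Longrightarrow> ent11 b \<noteq> 0"
  using B_M2 B_entries(1) by fastforce

lemma BK_unit: assumes "b \<in> B" "b \<in> K" shows "unit (ent11 b)"
proof -
  obtain a x e where b: "b = M2 a x 0 e" using B_M2 assms by blast
  have "e = inverse (cj a)" "a \<noteq> 0" using B_entries assms b by auto
  moreover have "Oi a" "Oi e" using assms b by (auto simp: K_iff)
  ultimately show ?thesis unfolding b by (auto simp: unit_def inP_def v_inverse v_cj)
qed

text \<open>\<open>B\<close> is the stabiliser of the isotropic line spanned by \<open>(0, 1)\<close> under right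
  multiplication, so \<open>B g\<close> is determined by the line of the bottom row of \<open>g\<close>.\<close>

lemma same_row_B:
  assumes "G g1" "G g2" "ent21 g1 * ent22 g2 = ent22 g1 * ent21 g2"
  shows "mmul g1 (ginv g2) \<in> B"
proof -
  obtain a1 b1 c1 e1 where g1: "g1 = M2 a1 b1 c1 e1" by (cases g1)
  obtain a2 b2 c2 e2 where g2: "g2 = M2 a2 b2 c2 e2" by (cases g2)
  have iso: "c2 * cj e2 + e2 * cj c2 = 0" using G_bottom_row_isotropic assms g2 by blast
  have eq: "c1 * e2 = e1 * c2" using assms g1 g2 by simp
  have "c1 * cj e2 + e1 * cj c2 = 0"
  proof (cases "e2 = 0")
    case True
    then have "c2 \<noteq> 0" using assms(2) g2 by (auto simp: G_iff)
    then show ?thesis using eq True by simp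
  next
    case False
    then have "c1 * cj e2 + e1 * cj c2 = e1 * (c2 * cj e2 + e2 * cj c2) / e2"
      using eq by (simp add: field_simps)
    then show ?thesis using iso by simp
  qed
  moreover have "G (mmul g1 (ginv g2))" using assms G_mmul G_ginv by blast
  ultimately show ?thesis using g1 g2 by (simp add: B_iff)
qed

lemma lower_unip_row_ratio:
  assumes "G k" "ent22 k \<noteq> 0"
  defines "t \<equiv> ent21 k / ent22 k"
  shows "t + cj t = 0" and "mmul k (ginv (lower_unip t)) \<in> B"
proof -
  obtain a x c e where k: "k = M2 a x c e" by (cases k)
  have "c * cj e + e * cj c = 0" using G_bottom_row_isotropic assms k by blast
  moreover have "c / e + cj (c / e) = (c * cj e + e * cj c) / (e * cj e)"
    using assms k by (simp add: cj_divide field_simps)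
  ultimately show t: "t + cj t = 0" using k unfolding t_def by simp
  have "G (lower_unip t)" using t G_lower_unip by blast
  moreover have "ent21 k * ent22 (lower_unip t) = ent22 k * ent21 (lower_unip t)"
    using assms(2) by (simp add: lower_unip_def t_def)
  ultimately show "mmul k (ginv (lower_unip t)) \<in> B" using same_row_B assms(1) by blast
qed

lemma K_with_same_row: assumes "G g" shows "\<exists>k\<in>K. ent21 g * ent22 k = ent22 g * ent21 k"
proof -
  obtain a x c e where g: "g = M2 a x c e" by (cases g)
  have iso: "c * cj e + e * cj c = 0" using G_bottom_row_isotropic assms g by blast
  show ?thesis
  proof (cases "e \<noteq> 0 \<and> Oi (c / e)")
    case True
    define k where "k = lower_unip (c / e)"
    have "G k" using lower_unip_row_ratio(1)[OF assms] True g by (simp add: k_def G_lower_unip)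
    then show ?thesis using True g by (intro bexI[of _ k]) (auto simp: K_iff k_def lower_unip_def)
  next
    case False
    then have c: "c \<noteq> 0" using assms g by (auto simp: G_iff)
    define z where "z = e / c"
    have "Oi z"
      using False c by (cases "e = 0") (auto simp: z_def inP_def v_divide)
    moreover have "z + cj z = (e * cj c + c * cj e) / (c * cj c)"
      using c by (simp add: z_def cj_divide field_simps)
    then have "z + cj z = 0" using iso by (simp add: add.commute)
    then have "G (M2 0 1 1 z)" by (simp add: G_iff add.commute)
    ultimately show ?thesis using g c by (intro bexI[of _ "M2 0 1 1 z"]) (auto simp: K_iff z_def)
  qed
qed

lemma iwasawa: assumes "G g" shows "\<exists>b k. b \<in> B \<and> k \<in> K \<and> g = mmul b k"
proof -
  obtain k where k: "k \<in> K" "ent21 g * ent22 k = ent22 g * ent21 k"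
    using K_with_same_row[OF assms] by blast
  then have "mmul g (ginv k) \<in> B" using same_row_B assms K_G by blast
  then show ?thesis using k K_G by (intro exI[of _ "mmul g (ginv k)"] exI[of _ k]) simp
qed

definition Bpart :: "'e mat2 \<Rightarrow> 'e mat2" where
  "Bpart g = fst (SOME p. fst p \<in> B \<and> snd p \<in> K \<and> g = mmul (fst p) (snd p))"
definition Kpart :: "'e mat2 \<Rightarrow> 'e mat2" where
  "Kpart g = snd (SOME p. fst p \<in> B \<and> snd p \<in> K \<and> g = mmul (fst p) (snd p))"

lemma iwasawa_parts:
  assumes "G g" shows "Bpart g \<in> B" "Kpart g \<in> K" "g = mmul (Bpart g) (Kpart g)"
proof -
  have "\<exists>p. fst p \<in> B \<and> snd p \<in> K \<and> g = mmul (fst p) (snd p)"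
    using iwasawa[OF assms] by auto
  from someI_ex[OF this] show "Bpart g \<in> B" "Kpart g \<in> K" "g = mmul (Bpart g) (Kpart g)"
    unfolding Bpart_def Kpart_def by auto
qed

lemma iwasawa_change:
  assumes "b1 \<in> B" "b2 \<in> B" "k1 \<in> K" "k2 \<in> K" "mmul b1 k1 = mmul b2 k2"
  shows "mmul k1 (ginv k2) \<in> B \<inter> K" "b2 = mmul b1 (mmul k1 (ginv k2))"
proof -
  have G: "G b1" "G k2" using assms by (auto simp: B_iff K_iff)
  have eq: "mmul k1 (ginv k2) = mmul (ginv b1) b2"
    using arg_cong[OF assms(5), of "\<lambda>g. mmul (ginv b1) (mmul g (ginv k2))"] G
    by (simp add: mmul_assoc ginv_right)
  moreover have "mmul (ginv b1) b2 \<in> B" using assms B_mmul B_ginv by blast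
  moreover have "mmul k1 (ginv k2) \<in> K" using assms K_mmul K_ginv by blast
  ultimately show "mmul k1 (ginv k2) \<in> B \<inter> K" by simp
  show "b2 = mmul b1 (mmul k1 (ginv k2))" using eq G by simp
qed

lemma lower_unip_mmul: "mmul (lower_unip y) (lower_unip y') = lower_unip (y + y')"
  by (simp add: lower_unip_def add.commute)
lemma ginv_lower_unip: "ginv (lower_unip y) = lower_unip (cj y)"
  by (simp add: lower_unip_def)

lemma torus_BK: "unit a \<Longrightarrow> torus a \<in> B \<inter> K"
  using G_torus[of a] unit_nz[of a] unit_O unit_inverse unit_cj
  by (simp add: B_iff K_iff torus_def)

lemma lower_unip_Kd: "y + cj y = 0 \<Longrightarrow> P n y \<Longrightarrow> lower_unip y \<in> Kd n"
  using P_O G_lower_unip[of y] by (auto simp: Kd_iff K_iff lower_unip_def Imat_def)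

lemma K_mmul_lower_unip_B:
  assumes g: "g \<in> K" and g21: "P n (ent21 g)" and n: "1 \<le> n"
  shows "\<exists>y. lower_unip y \<in> Kd n \<and> mmul g (lower_unip y) \<in> B"
proof -
  obtain a b c e where gM: "g = M2 a b c e" by (cases g)
  have O: "Oi a" "Oi b" "Oi e" using g gM by (auto simp: K_iff)
  have "unit (a * e - b * c)" using K_det_unit[OF g] gM by simp
  moreover have "P 1 (b * c)" using P_Omult[OF O(2) P_mono[OF n g21]] gM by simp
  ultimately have "unit (e * a)" using unit_if_P1_diff[of "a * e - b * c" "e * a"] by (simp add: mult.commute)
  then have e: "unit e" using unit_factor O by blast
  define \<tau> where "\<tau> = ent21 g / ent22 g"
  have e22: "ent22 g \<noteq> 0" using e unit_nz gM by simp
  have \<tau>: "\<tau> + cj \<tau> = 0" "mmul g (ginv (lower_unip \<tau>)) \<in> B"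
    using lower_unip_row_ratio[OF K_G[OF g] e22] unfolding \<tau>_def by auto
  have "P n \<tau>" unfolding \<tau>_def using P_div_unit[OF g21 e] gM by simp
  then have "lower_unip (cj \<tau>) \<in> Kd n" using \<tau>(1) lower_unip_Kd P_cj by (simp add: add.commute)
  then show ?thesis using \<tau>(2) ginv_lower_unip by metis
qed

end

section \<open>Intertwiners of \<open>V\<^sub>\<chi>\<^sup>K\<^sub>d\<close> and \<open>B \<inter> K\<close>-equivariant functionals\<close>

text \<open>The only property of \<open>\<chi>\<close> used beyond multiplicativity is that it is trivial on
  \<open>1 + p\<^sup>d\<close>, so that \<open>B \<inter> K\<^sub>d\<close> lies in the kernel of the extended character.\<close>

locale level_char = unramified cj v eps s for cj :: "'e::field \<Rightarrow> 'e" and v eps s +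
  fixes chi :: "'e \<Rightarrow> complex" and d :: nat
  assumes char: "is_char chi" and d_pos: "1 \<le> d"
    and chi_trivial: "\<And>a. a \<noteq> 0 \<Longrightarrow> inP v d (a - 1) \<Longrightarrow> chi a = 1"
begin

lemma chi_mult: "a \<noteq> 0 \<Longrightarrow> b \<noteq> 0 \<Longrightarrow> chi (a * b) = chi a * chi b"
  using char by (simp add: is_char_def)
lemma chi_nz: "a \<noteq> 0 \<Longrightarrow> chi a \<noteq> 0"
  using char by (simp add: is_char_def)

definition chiB :: "'e mat2 \<Rightarrow> complex" where "chiB b = chi (ent11 b)"

lemma chiB_mult: "b \<in> B \<Longrightarrow> b' \<in> B \<Longrightarrow> chiB (mmul b b') = chiB b * chiB b'"
  unfolding chiB_def by (simp add: ent11_mmul_B B_iff chi_mult ent11_B_nz)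
lemma chiB_nz: "b \<in> B \<Longrightarrow> chiB b \<noteq> 0"
  unfolding chiB_def by (simp add: chi_nz ent11_B_nz)
lemma chiB_Imat [simp]: "chiB Imat = 1"
  using chi_mult[of 1 1] chi_nz[of 1] by (simp add: chiB_def Imat_def)
lemma chiB_BKd: assumes "n \<in> B" "n \<in> Kd d" shows "chiB n = 1"
proof -
  obtain a x e where n: "n = M2 a x 0 e" using B_M2 assms by blast
  have "P d (a - 1)" using assms n by (simp add: Kd_iff Imat_def)
  moreover have "a \<noteq> 0" using ent11_B_nz assms n by fastforce
  ultimately show ?thesis unfolding chiB_def n using chi_trivial by simp
qed

abbreviation W where "W \<equiv> Vfix cj v chi d"

lemma W_iff: "f \<in> W \<longleftrightarrow> (\<forall>g. \<not> G g \<longrightarrow> f g = 0) \<and>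
   (\<forall>b\<in>B. \<forall>g. G g \<longrightarrow> f (mmul b g) = chiB b * f g) \<and> (\<forall>k\<in>Kd d. \<forall>g. f (mmul g k) = f g)"
  unfolding Vfix_def Vchi_def rtrans_def chiB_def fun_eq_iff by blast

lemma W_out: "f \<in> W \<Longrightarrow> \<not> G g \<Longrightarrow> f g = 0" by (simp add: W_iff)
lemma W_left: "f \<in> W \<Longrightarrow> b \<in> B \<Longrightarrow> G g \<Longrightarrow> f (mmul b g) = chiB b * f g" by (simp add: W_iff)
lemma W_right: "f \<in> W \<Longrightarrow> k \<in> Kd d \<Longrightarrow> f (mmul g k) = f g" by (simp add: W_iff)

lemma W_zero: "(0 :: 'e mat2 \<Rightarrow> complex) \<in> W" by (simp add: W_iff)
lemma W_add: "f \<in> W \<Longrightarrow> h \<in> W \<Longrightarrow> f + h \<in> W" by (simp add: W_iff algebra_simps)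
lemma W_scale: "f \<in> W \<Longrightarrow> (\<lambda>g. c * f g) \<in> W" by (simp add: W_iff)
lemma W_sum: "finite A \<Longrightarrow> (\<And>a. a \<in> A \<Longrightarrow> F a \<in> W) \<Longrightarrow> sum F A \<in> W"
  by (induction A rule: finite_induct) (auto intro: W_zero W_add)

lemma W_rtrans: assumes f: "f \<in> W" and k: "k \<in> K" shows "rtrans k f \<in> W"
proof -
  have Gk: "G k" using k by (simp add: K_iff)
  have "rtrans k f g = 0" if "\<not> G g" for g
  proof -
    have "\<not> G (mmul g k)" using that G_of_mmul Gk by blast
    then show ?thesis using f W_out by (simp add: rtrans_apply)
  qed
  moreover have "rtrans k f (mmul b g) = chiB b * rtrans k f g" if "b \<in> B" "G g" for b g
    using W_left[OF f that(1) G_mmul[OF that(2) Gk]] by (simp add: rtrans_apply mmul_assoc)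
  moreover have "rtrans k f (mmul g k') = rtrans k f g" if "k' \<in> Kd d" for k' g
  proof -
    have "mmul (mmul g k') k = mmul (mmul g k) (mmul (ginv k) (mmul k' k))"
      using Gk by (simp add: mmul_assoc)
    then show ?thesis using W_right[OF f Kd_conj'[OF k that]] by (simp add: rtrans_apply)
  qed
  ultimately show ?thesis by (simp add: W_iff)
qed

abbreviation Hom where "Hom \<equiv> HomK cj v W"

lemma Hom_iff: "\<phi> \<in> Hom \<longleftrightarrow> (\<forall>f\<in>W. \<phi> f \<in> W) \<and> (\<forall>f. f \<notin> W \<longrightarrow> \<phi> f = 0) \<and>
     (\<forall>f\<in>W. \<forall>h\<in>W. \<phi> (f + h) = \<phi> f + \<phi> h) \<and>
     (\<forall>c. \<forall>f\<in>W. \<phi> (\<lambda>g. c * f g) = (\<lambda>g. c * \<phi> f g)) \<and>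
     (\<forall>k\<in>K. \<forall>f\<in>W. \<phi> (rtrans k f) = rtrans k (\<phi> f))"
  by (simp add: HomK_def)

definition evI :: "(('e mat2 \<Rightarrow> complex) \<Rightarrow> ('e mat2 \<Rightarrow> complex)) \<Rightarrow> ('e mat2 \<Rightarrow> complex) \<Rightarrow> complex"
  where "evI \<phi> f = \<phi> f Imat"

definition B_equivariant :: "(('e mat2 \<Rightarrow> complex) \<Rightarrow> complex) \<Rightarrow> bool" where
  "B_equivariant l \<longleftrightarrow> (\<forall>f\<in>W. \<forall>h\<in>W. l (f + h) = l f + l h) \<and>
     (\<forall>c. \<forall>f\<in>W. l (\<lambda>g. c * f g) = c * l f) \<and>
     (\<forall>\<beta>\<in>B \<inter> K. \<forall>f\<in>W. l (rtrans \<beta> f) = chiB \<beta> * l f)"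

lemma B_equivariant_sum:
  assumes "B_equivariant l" "finite A" "\<And>a. a \<in> A \<Longrightarrow> F a \<in> W"
  shows "l (sum F A) = (\<Sum>a\<in>A. l (F a))"
  using assms(2,3)
proof (induction A rule: finite_induct)
  case empty
  have "l (\<lambda>g. 0 * (0::'e mat2 \<Rightarrow> complex) g) = 0 * l 0"
    using assms(1) W_zero by (simp only: B_equivariant_def)
  then show ?case by (simp add: zero_fun_def)
next
  case (insert x A)
  have "F x \<in> W" "sum F A \<in> W" using insert W_sum by auto
  then have "l (F x + sum F A) = l (F x) + l (sum F A)"
    using assms(1) by (simp add: B_equivariant_def)
  moreover have "l (sum F A) = (\<Sum>a\<in>A. l (F a))" using insert by simp
  ultimately show ?case by (simp only: sum.insert[OF insert.hyps])
qed

lemma Hom_formula: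
  assumes "\<phi> \<in> Hom" "f \<in> W" "G g"
  shows "\<phi> f g = chiB (Bpart g) * evI \<phi> (rtrans (Kpart g) f)"
proof -
  note iw = iwasawa_parts[OF assms(3)]
  have "\<phi> f g = \<phi> f (mmul (Bpart g) (Kpart g))" using iw by simp
  also have "\<dots> = chiB (Bpart g) * rtrans (Kpart g) (\<phi> f) Imat"
    using W_left[of "\<phi> f" "Bpart g" "Kpart g"] assms iw K_G by (simp add: Hom_iff rtrans_apply)
  also have "rtrans (Kpart g) (\<phi> f) = \<phi> (rtrans (Kpart g) f)" using assms iw by (simp add: Hom_iff)
  finally show ?thesis by (simp add: evI_def)
qed

lemma evI_B_equivariant: assumes "\<phi> \<in> Hom" shows "B_equivariant (evI \<phi>)"
proof -
  have "evI \<phi> (rtrans \<beta> f) = chiB \<beta> * evI \<phi> f" if "\<beta> \<in> B \<inter> K" "f \<in> W" for \<beta> f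
  proof -
    have "evI \<phi> (rtrans \<beta> f) = \<phi> f (mmul \<beta> Imat)"
      using assms that by (simp add: Hom_iff evI_def rtrans_apply)
    then show ?thesis using W_left[of "\<phi> f" \<beta> Imat] assms that G_Imat by (simp add: Hom_iff evI_def)
  qed
  then show ?thesis using assms by (simp add: B_equivariant_def evI_def Hom_iff)
qed

lemma Hom_eq_zero:
  assumes "\<phi> \<in> Hom" "\<And>f. f \<in> W \<Longrightarrow> evI \<phi> f = 0"
  shows "\<phi> = 0"
proof (intro ext)
  fix f g
  show "\<phi> f g = 0 f g"
  proof (cases "f \<in> W \<and> G g")
    case True
    then have "f \<in> W" "G g" by auto
    then show ?thesis using Hom_formula[OF assms(1)] assms(2) W_rtrans iwasawa_parts(2) by simp
  next
    case False
    then show ?thesis using W_out[of "\<phi> f" g] assms(1) by (cases "f \<in> W") (auto simp: Hom_iff)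
  qed
qed

definition Hom_of_functional ::
    "(('e mat2 \<Rightarrow> complex) \<Rightarrow> complex) \<Rightarrow> ('e mat2 \<Rightarrow> complex) \<Rightarrow> ('e mat2 \<Rightarrow> complex)"
  where "Hom_of_functional l f g =
    (if f \<in> W \<and> G g then chiB (Bpart g) * l (rtrans (Kpart g) f) else 0)"

lemma Hom_of_functional_shift:
  assumes l: "B_equivariant l" and f: "f \<in> W" and g: "G g" and b: "b \<in> B" and k: "k \<in> K"
  shows "Hom_of_functional l f (mmul b (mmul g k)) = chiB b * Hom_of_functional l (rtrans k f) g"
proof -
  let ?g' = "mmul b (mmul g k)"
  have G': "G ?g'" using g k b K_G B_G G_mmul by blast
  note iw = iwasawa_parts[OF g] and iw' = iwasawa_parts[OF G']
  have "mmul (Bpart ?g') (Kpart ?g') = mmul (mmul b (Bpart g)) (mmul (Kpart g) k)"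
    using iw(3) iw'(3) by (metis mmul_assoc)
  note change = iwasawa_change[OF iw'(1) B_mmul[OF b iw(1)] iw'(2) K_mmul[OF iw(2) k] this]
  define m where "m = mmul (Kpart ?g') (ginv (mmul (Kpart g) k))"
  have m: "m \<in> B \<inter> K" using change unfolding m_def by blast
  have "rtrans (Kpart ?g') f = rtrans m (rtrans (mmul (Kpart g) k) f)"
    unfolding m_def rtrans_rtrans using K_G[OF K_mmul[OF iw(2) k]] by simp
  moreover have "rtrans (mmul (Kpart g) k) f \<in> W" using W_rtrans f K_mmul iw(2) k by blast
  ultimately have "l (rtrans (Kpart ?g') f) = chiB m * l (rtrans (mmul (Kpart g) k) f)"
    using l m by (simp add: B_equivariant_def)
  moreover have "chiB (Bpart ?g') * chiB m = chiB b * chiB (Bpart g)"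
    using change(2) m iw'(1) iw(1) b unfolding m_def[symmetric] by (metis B_mmul IntD1 chiB_mult)
  ultimately show ?thesis using G' g f W_rtrans[OF f k]
    unfolding Hom_of_functional_def by (simp add: rtrans_rtrans mult.assoc)
qed

lemma Hom_of_functional_W:
  assumes l: "B_equivariant l" and f: "f \<in> W"
  shows "Hom_of_functional l f \<in> W"
proof -
  have "Hom_of_functional l f (mmul g k) = Hom_of_functional l f g" if "k \<in> Kd d" for k g
  proof (cases "G g")
    case True
    have "rtrans k f = f" using f that by (simp add: W_iff rtrans_def fun_eq_iff)
    then show ?thesis using Hom_of_functional_shift[OF l f True B_Imat Kd_K[OF that]] by simp
  next
    case False
    then have "\<not> G (mmul g k)" using G_of_mmul Kd_K K_G that by blast
    then show ?thesis using False by (simp add: Hom_of_functional_def)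
  qed
  then show ?thesis
    using Hom_of_functional_shift[OF l f _ _ K_Imat] by (simp add: W_iff Hom_of_functional_def)
qed

lemma Hom_of_functional_Hom: assumes l: "B_equivariant l" shows "Hom_of_functional l \<in> Hom"
proof -
  have "Hom_of_functional l (rtrans k f) = rtrans k (Hom_of_functional l f)" if "k \<in> K" "f \<in> W" for k f
  proof (rule ext)
    fix g
    show "Hom_of_functional l (rtrans k f) g = rtrans k (Hom_of_functional l f) g"
    proof (cases "G g")
      case True
      then show ?thesis
        using Hom_of_functional_shift[OF l that(2) True B_Imat that(1)] by (simp add: rtrans_apply)
    next
      case False
      then have "\<not> G (mmul g k)" using G_of_mmul K_G that by blast
      then show ?thesis using False by (simp add: Hom_of_functional_def rtrans_apply)
    qed
  qed
  moreover have "l (rtrans k (f + h)) = l (rtrans k f) + l (rtrans k h)"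
      "l (rtrans k (\<lambda>g. c * f g)) = c * l (rtrans k f)" if "k \<in> K" "f \<in> W" "h \<in> W" for k f h c
  proof -
    have "rtrans k (f + h) = rtrans k f + rtrans k h" "rtrans k (\<lambda>g. c * f g) = (\<lambda>g. c * rtrans k f g)"
      by (simp_all add: rtrans_def fun_eq_iff)
    then show "l (rtrans k (f + h)) = l (rtrans k f) + l (rtrans k h)"
      "l (rtrans k (\<lambda>g. c * f g)) = c * l (rtrans k f)"
      using l W_rtrans that unfolding B_equivariant_def by simp_all
  qed
  then have "Hom_of_functional l (f + h) = Hom_of_functional l f + Hom_of_functional l h"
      "Hom_of_functional l (\<lambda>g. c * f g) = (\<lambda>g. c * Hom_of_functional l f g)"
    if "f \<in> W" "h \<in> W" for f h c
    using that W_add W_scale iwasawa_parts(2)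
    by (auto simp: Hom_of_functional_def fun_eq_iff algebra_simps)
  ultimately show ?thesis using Hom_of_functional_W[OF l]
    by (simp add: Hom_iff Hom_of_functional_def fun_eq_iff)
qed

lemma evI_Hom_of_functional:
  assumes l: "B_equivariant l" and f: "f \<in> W"
  shows "evI (Hom_of_functional l) f = l f"
proof -
  note iw = iwasawa_parts[OF G_Imat]
  have e: "mmul (Bpart Imat) (Kpart Imat) = mmul Imat Imat" using iw by simp
  note change = iwasawa_change[OF iw(1) B_Imat iw(2) K_Imat e]
  have kB: "Kpart Imat \<in> B \<inter> K" using change(1) by simp
  have "l (rtrans (Kpart Imat) f) = chiB (Kpart Imat) * l f"
    using l kB f by (simp add: B_equivariant_def)
  moreover have "chiB (Bpart Imat) * chiB (Kpart Imat) = 1"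
    using chiB_mult[OF iw(1), of "Kpart Imat"] kB iw(3)[symmetric] by simp
  ultimately show ?thesis using f G_Imat
    by (simp add: evI_def Hom_of_functional_def mult.assoc[symmetric])
qed

section \<open>Double cosets \<open>B x K\<^sub>d\<close> and the functions they support\<close>

definition dcoset :: "'e mat2 \<Rightarrow> 'e mat2 set" where
  "dcoset x = {mmul b (mmul x k) | b k. b \<in> B \<and> k \<in> Kd d}"

lemma dcosetI: "b \<in> B \<Longrightarrow> k \<in> Kd d \<Longrightarrow> mmul b (mmul x k) \<in> dcoset x"
  unfolding dcoset_def by blast
lemma dcosetE:
  "g \<in> dcoset x \<Longrightarrow> (\<And>b k. b \<in> B \<Longrightarrow> k \<in> Kd d \<Longrightarrow> g = mmul b (mmul x k) \<Longrightarrow> thesis) \<Longrightarrow> thesis"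
  unfolding dcoset_def by blast
lemma dcoset_self: "x \<in> dcoset x"
  using dcosetI[OF B_Imat Kd_Imat, of x] by simp
lemma dcoset_G: "G x \<Longrightarrow> g \<in> dcoset x \<Longrightarrow> G g"
  by (erule dcosetE) (metis B_G G_mmul K_G Kd_K)
lemma dcoset_left: "b \<in> B \<Longrightarrow> g \<in> dcoset x \<Longrightarrow> mmul b g \<in> dcoset x"
  by (erule dcosetE) (metis dcosetI B_mmul mmul_assoc)
lemma dcoset_right: "k \<in> Kd d \<Longrightarrow> g \<in> dcoset x \<Longrightarrow> mmul g k \<in> dcoset x"
  by (erule dcosetE) (metis dcosetI Kd_mmul mmul_assoc)
lemma dcoset_left_iff: "b \<in> B \<Longrightarrow> mmul b g \<in> dcoset x \<longleftrightarrow> g \<in> dcoset x"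
  using dcoset_left[of "ginv b" "mmul b g" x] dcoset_left[of b g x] B_ginv B_G by auto
lemma dcoset_right_iff: "k \<in> Kd d \<Longrightarrow> mmul g k \<in> dcoset x \<longleftrightarrow> g \<in> dcoset x"
  using dcoset_right[of "ginv k" "mmul g k" x] dcoset_right[of k g x] Kd_ginv Kd_K K_G by auto

lemma dcoset_eq: assumes "G x" "y \<in> dcoset x" shows "dcoset y = dcoset x"
proof -
  obtain b0 k0 where bk: "b0 \<in> B" "k0 \<in> Kd d" "y = mmul b0 (mmul x k0)"
    using assms(2) by (rule dcosetE)
  have "x = mmul (ginv b0) (mmul y (ginv k0))"
    using bk B_G[OF bk(1)] K_G[OF Kd_K[OF bk(2)]] by (simp add: mmul_assoc ginv_right)
  moreover have "mmul (ginv b0) (mmul y (ginv k0)) \<in> dcoset y" using dcosetI B_ginv Kd_ginv bk by blast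
  ultimately have "x \<in> dcoset y" by simp
  have sub: "dcoset y' \<subseteq> dcoset x'" if "y' \<in> dcoset x'" for x' y'
  proof
    fix g assume "g \<in> dcoset y'"
    then obtain b k where "b \<in> B" "k \<in> Kd d" "g = mmul b (mmul y' k)" by (rule dcosetE)
    then show "g \<in> dcoset x'" using that dcoset_left dcoset_right by (simp add: mmul_assoc)
  qed
  show ?thesis using sub[OF assms(2)] sub[OF \<open>x \<in> dcoset y\<close>] by blast
qed

lemma dcoset_mmul_K: assumes "\<beta> \<in> K" "g \<in> dcoset x" shows "mmul g \<beta> \<in> dcoset (mmul x \<beta>)"
proof -
  obtain b k where bk: "b \<in> B" "k \<in> Kd d" "g = mmul b (mmul x k)" using assms(2) by (rule dcosetE)
  have "mmul g \<beta> = mmul b (mmul (mmul x \<beta>) (mmul (ginv \<beta>) (mmul k \<beta>)))"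
    using bk assms K_G by (simp add: mmul_assoc)
  then show ?thesis using dcosetI[OF bk(1) Kd_conj'[OF assms(1) bk(2)]] by simp
qed

text \<open>The function in \<open>W\<close> supported on \<open>B x K\<^sub>d\<close> with value \<open>\<chi>(b)\<close> at \<open>b x k\<close>; it is
  well defined for \<open>x \<in> K\<close> because then \<open>B \<inter> x K\<^sub>d x\<inverse> \<subseteq> B \<inter> K\<^sub>d\<close>.\<close>

definition dcoset_fun :: "'e mat2 \<Rightarrow> 'e mat2 \<Rightarrow> complex" where
  "dcoset_fun x g =
    (if g \<in> dcoset x then chiB (SOME b. b \<in> B \<and> (\<exists>k\<in>Kd d. g = mmul b (mmul x k))) else 0)"

lemma chiB_dcoset_unique:
  assumes x: "x \<in> K" and b: "b \<in> B" "b' \<in> B" and k: "k \<in> Kd d" "k' \<in> Kd d"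
    and e: "mmul b (mmul x k) = mmul b' (mmul x k')"
  shows "chiB b = chiB b'"
proof -
  have G: "G b" "G b'" "G x" "G k" using assms B_G K_G Kd_K by auto
  define \<beta> where "\<beta> = mmul (ginv b') b"
  have "mmul \<beta> (mmul x k) = mmul x k'" unfolding \<beta>_def using e G by (simp add: mmul_assoc)
  then have "\<beta> = mmul x (mmul (mmul k' (ginv k)) (ginv x))"
    using G by (metis mmul_ginv_cancel(3) mmul_assoc)
  then have "\<beta> \<in> Kd d" using Kd_conj[OF x Kd_mmul[OF k(2) Kd_ginv[OF k(1)]]] by (simp add: mmul_assoc)
  moreover have "\<beta> \<in> B" unfolding \<beta>_def using b B_mmul B_ginv by blast
  moreover have "b = mmul b' \<beta>" unfolding \<beta>_def using G by simp
  ultimately show ?thesis using chiB_mult[OF b(2)] chiB_BKd by simp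
qed

lemma dcoset_fun_eq: assumes "x \<in> K" "b \<in> B" "k \<in> Kd d"
  shows "dcoset_fun x (mmul b (mmul x k)) = chiB b"
proof -
  let ?g = "mmul b (mmul x k)"
  have "\<exists>b'. b' \<in> B \<and> (\<exists>k\<in>Kd d. ?g = mmul b' (mmul x k))" using assms by blast
  from someI_ex[OF this] obtain k' where
    "(SOME b'. b' \<in> B \<and> (\<exists>k\<in>Kd d. ?g = mmul b' (mmul x k))) \<in> B" "k' \<in> Kd d"
    "?g = mmul (SOME b'. b' \<in> B \<and> (\<exists>k\<in>Kd d. ?g = mmul b' (mmul x k))) (mmul x k')" by blast
  then show ?thesis using chiB_dcoset_unique[OF assms(1) _ assms(2) _ assms(3)] dcosetI[OF assms(2,3)]
    unfolding dcoset_fun_def by (metis (no_types, lifting))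
qed

lemma dcoset_fun_out: "g \<notin> dcoset x \<Longrightarrow> dcoset_fun x g = 0"
  by (simp add: dcoset_fun_def)
lemma dcoset_fun_self: "x \<in> K \<Longrightarrow> dcoset_fun x x = 1"
  using dcoset_fun_eq[OF _ B_Imat Kd_Imat, of x] by simp

lemma dcoset_fun_W: assumes x: "x \<in> K" shows "dcoset_fun x \<in> W"
proof -
  have "dcoset_fun x g = 0" if "\<not> G g" for g
    using that dcoset_G[OF K_G[OF x]] dcoset_fun_out by blast
  moreover have "dcoset_fun x (mmul b g) = chiB b * dcoset_fun x g" if "b \<in> B" for b g
  proof (cases "g \<in> dcoset x")
    case True
    then show ?thesis using dcoset_fun_eq[OF x] that B_mmul chiB_mult
      by (elim dcosetE) (simp add: mmul_assoc[symmetric])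
  qed (use dcoset_left_iff[OF that] dcoset_fun_out in simp)
  moreover have "dcoset_fun x (mmul g k) = dcoset_fun x g" if "k \<in> Kd d" for k g
  proof (cases "g \<in> dcoset x")
    case True
    then show ?thesis using dcoset_fun_eq[OF x] that Kd_mmul
      by (elim dcosetE) (simp add: mmul_assoc)
  qed (use dcoset_right_iff[OF that] dcoset_fun_out in simp)
  ultimately show ?thesis by (simp add: W_iff)
qed

lemma W_supported_on_dcoset:
  assumes x: "G x" and h: "h \<in> W" "h' \<in> W"
    and supp: "\<And>g. g \<notin> dcoset x \<Longrightarrow> h g = 0" "\<And>g. g \<notin> dcoset x \<Longrightarrow> h' g = 0"
    and h'1: "h' x = 1"
  shows "h = (\<lambda>g. h x * h' g)"
proof (rule ext)
  fix g show "h g = h x * h' g"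
  proof (cases "g \<in> dcoset x")
    case True
    then obtain b k where bk: "b \<in> B" "k \<in> Kd d" "g = mmul b (mmul x k)" by (rule dcosetE)
    have Gxk: "G (mmul x k)" using x bk K_G Kd_K G_mmul by blast
    have "h g = chiB b * h x" using W_left[OF h(1) bk(1) Gxk] W_right[OF h(1) bk(2)] bk by simp
    moreover have "h' g = chiB b" using W_left[OF h(2) bk(1) Gxk] W_right[OF h(2) bk(2)] bk h'1 by simp
    ultimately show ?thesis by simp
  qed (use supp in simp)
qed

lemma rtrans_dcoset_fun_out:
  assumes x: "x \<in> K" and \<beta>: "\<beta> \<in> K" and y: "G y" "mmul y \<beta> \<in> dcoset x"
    and g: "g \<notin> dcoset y"
  shows "rtrans \<beta> (dcoset_fun x) g = 0"
proof (rule ccontr)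
  assume "rtrans \<beta> (dcoset_fun x) g \<noteq> 0"
  then have "mmul g \<beta> \<in> dcoset x" using dcoset_fun_out by (auto simp: rtrans_apply)
  then have "mmul g \<beta> \<in> dcoset (mmul y \<beta>)" using dcoset_eq[OF K_G[OF x] y(2)] by simp
  then have "mmul (mmul g \<beta>) (ginv \<beta>) \<in> dcoset (mmul (mmul y \<beta>) (ginv \<beta>))"
    using dcoset_mmul_K K_ginv \<beta> by blast
  then show False using g K_G[OF \<beta>] by simp
qed

definition compatible :: "'e mat2 \<Rightarrow> bool" where
  "compatible x \<longleftrightarrow>
    (\<forall>\<beta>\<in>B \<inter> K. \<forall>b\<in>B. \<forall>k\<in>Kd d. mmul x \<beta> = mmul b (mmul x k) \<longrightarrow> chiB \<beta> = chiB b)"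

text \<open>If \<open>x \<beta> = b x k\<close> with \<open>\<chi>(\<beta>) \<noteq> \<chi>(b)\<close>, then right translation by \<open>\<beta>\<close> multiplies
  \<open>dcoset_fun x\<close> by \<open>\<chi>(b)\<close>, while an equivariant functional scales it by \<open>\<chi>(\<beta>)\<close>.\<close>

lemma B_equivariant_incompatible:
  assumes x: "x \<in> K" and l: "B_equivariant l" and "\<not> compatible x"
  shows "l (dcoset_fun x) = 0"
proof -
  obtain \<beta> b k where \<beta>: "\<beta> \<in> B \<inter> K" and b: "b \<in> B" and k: "k \<in> Kd d"
    and e: "mmul x \<beta> = mmul b (mmul x k)" and ne: "chiB \<beta> \<noteq> chiB b"
    using assms(3) unfolding compatible_def by blast
  let ?h = "rtrans \<beta> (dcoset_fun x)"
  have "mmul x \<beta> \<in> dcoset x" using e dcosetI[OF b k] by simp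
  then have "?h = (\<lambda>g. ?h x * dcoset_fun x g)"
    using rtrans_dcoset_fun_out[OF x _ K_G[OF x]] W_rtrans[OF dcoset_fun_W[OF x]] \<beta> x
    by (intro W_supported_on_dcoset[OF K_G[OF x] _ dcoset_fun_W[OF x]])
      (auto simp: dcoset_fun_out dcoset_fun_self)
  moreover have "?h x = chiB b" using e dcoset_fun_eq[OF x b k] by (simp add: rtrans_apply)
  ultimately have "l ?h = chiB b * l (dcoset_fun x)"
    using l dcoset_fun_W[OF x] by (simp add: B_equivariant_def)
  moreover have "l ?h = chiB \<beta> * l (dcoset_fun x)"
    using l dcoset_fun_W[OF x] \<beta> by (simp add: B_equivariant_def)
  ultimately show ?thesis using ne by simp
qed

section \<open>Averaging over \<open>(B \<inter> K) / (B \<inter> K\<^sub>d)\<close>\<close>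

definition coset :: "'e mat2 \<Rightarrow> 'e mat2 set" where
  "coset \<beta> = {mmul \<beta> n | n. n \<in> B \<inter> Kd d}"
definition cosets :: "'e mat2 set set" where
  "cosets = coset ` (B \<inter> K)"
definition coset_rep :: "'e mat2 set \<Rightarrow> 'e mat2" where
  "coset_rep C = (SOME \<beta>. \<beta> \<in> C)"

lemma BK_mmul: "a \<in> B \<inter> K \<Longrightarrow> b \<in> B \<inter> K \<Longrightarrow> mmul a b \<in> B \<inter> K"
  using B_mmul K_mmul by simp
lemma BK_ginv: "a \<in> B \<inter> K \<Longrightarrow> ginv a \<in> B \<inter> K"
  using B_ginv K_ginv by simp
lemma BKd_BK: "n \<in> B \<inter> Kd d \<Longrightarrow> n \<in> B \<inter> K"
  using Kd_K by blast
lemma BKd_conj: "\<beta> \<in> B \<inter> K \<Longrightarrow> n \<in> B \<inter> Kd d \<Longrightarrow> mmul (ginv \<beta>) (mmul n \<beta>) \<in> B \<inter> Kd d"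
  using Kd_conj' B_mmul B_ginv by simp

lemma coset_self: "\<beta> \<in> coset \<beta>"
  unfolding coset_def using B_Imat Kd_Imat by force
lemma coset_subset: "\<beta> \<in> B \<inter> K \<Longrightarrow> coset \<beta> \<subseteq> B \<inter> K"
  unfolding coset_def using BK_mmul BKd_BK by blast

lemma coset_eq: assumes "\<beta> \<in> B \<inter> K" "\<gamma> \<in> coset \<beta>" shows "coset \<gamma> = coset \<beta>"
proof -
  obtain n where n: "n \<in> B \<inter> Kd d" "\<gamma> = mmul \<beta> n" using assms(2) unfolding coset_def by blast
  have "G n" using n Kd_K K_G by blast
  then have "mmul \<gamma> m = mmul \<beta> (mmul n m)" "mmul \<beta> m = mmul \<gamma> (mmul (ginv n) m)" for m
    using n by (simp_all add: mmul_assoc[symmetric])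
  moreover have "mmul n m \<in> B \<inter> Kd d" "mmul (ginv n) m \<in> B \<inter> Kd d" if "m \<in> B \<inter> Kd d" for m
    using n that B_mmul Kd_mmul B_ginv Kd_ginv by auto
  ultimately show ?thesis unfolding coset_def by blast
qed

lemma coset_rep: assumes "C \<in> cosets"
  shows "coset_rep C \<in> B \<inter> K" "coset (coset_rep C) = C"
proof -
  have rep: "coset_rep C \<in> C"
    using assms coset_self unfolding cosets_def coset_rep_def by (metis image_iff someI_ex)
  then show "coset_rep C \<in> B \<inter> K" using assms coset_subset unfolding cosets_def by blast
  show "coset (coset_rep C) = C" using rep assms coset_eq unfolding cosets_def by blast
qed

lemma coset_rep_coset: "\<beta> \<in> B \<inter> K \<Longrightarrow> \<exists>n\<in>B \<inter> Kd d. coset_rep (coset \<beta>) = mmul \<beta> n"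
  using coset_rep(1)[of "coset \<beta>"] coset_self unfolding cosets_def coset_rep_def coset_def
  by (metis (mono_tags, lifting) image_eqI mem_Collect_eq someI_ex)

lemma coset_eq_if_congP:
  assumes \<beta>: "\<beta> \<in> B \<inter> K" "\<beta>' \<in> B \<inter> K" and cong: "congP d \<beta> \<beta>'"
  shows "coset \<beta> = coset \<beta>'"
proof -
  have "congP d (mmul (ginv \<beta>') \<beta>) (mmul (ginv \<beta>') \<beta>')"
    using congP_mmul_left[OF cong] \<beta> by (simp add: K_iff integral_mat_ginv)
  then have "mmul (ginv \<beta>') \<beta> \<in> B \<inter> Kd d"
    using \<beta> ginv_left K_G BK_mmul BK_ginv by (simp add: Kd_iff)
  moreover have "\<beta> = mmul \<beta>' (mmul (ginv \<beta>') \<beta>)" using \<beta> K_G by simp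
  ultimately have "\<beta> \<in> coset \<beta>'" unfolding coset_def by blast
  then show ?thesis using coset_eq[OF \<beta>(2)] by blast
qed

lemma finite_cosets: "finite cosets"
proof -
  obtain R where R: "finite R" "\<And>x. Oi x \<Longrightarrow> \<exists>r\<in>R. P d (x - r)"
    using finite_reps_mod_P[of d] by blast
  define reps where "reps = (\<lambda>(a, b, c, e). M2 a b c e) ` (R \<times> R \<times> R \<times> R)"
  define pick where "pick m = (SOME \<beta>. \<beta> \<in> B \<inter> K \<and> congP d \<beta> m)" for m
  have "cosets \<subseteq> (\<lambda>m. coset (pick m)) ` reps"
  proof
    fix C assume "C \<in> cosets"
    then obtain \<beta> where \<beta>: "\<beta> \<in> B \<inter> K" "C = coset \<beta>" unfolding cosets_def by blast
    obtain a b c e where be: "\<beta> = M2 a b c e" by (cases \<beta>)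
    have "Oi a" "Oi b" "Oi c" "Oi e" using \<beta> be by (auto simp: K_iff)
    then obtain ra rb rc re where r: "ra \<in> R" "rb \<in> R" "rc \<in> R" "re \<in> R"
      "P d (a - ra)" "P d (b - rb)" "P d (c - rc)" "P d (e - re)" using R(2) by metis
    define m where "m = M2 ra rb rc re"
    have m: "m \<in> reps" unfolding reps_def m_def using r by force
    have "congP d \<beta> m" using r be m_def by simp
    then have "\<exists>\<beta>'. \<beta>' \<in> B \<inter> K \<and> congP d \<beta>' m" using \<beta> by blast
    then have \<beta>': "pick m \<in> B \<inter> K" "congP d (pick m) m"
      using someI_ex unfolding pick_def by (metis (mono_tags, lifting))+
    have "congP d \<beta> (pick m)" using \<open>congP d \<beta> m\<close> \<beta>'(2) congP_sym congP_trans by blast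
    then show "C \<in> (\<lambda>m. coset (pick m)) ` reps" using \<beta> m \<beta>'(1) coset_eq_if_congP by blast
  qed
  moreover have "finite reps" unfolding reps_def using R by simp
  ultimately show ?thesis using finite_surj by blast
qed

definition coset_shift :: "'e mat2 \<Rightarrow> 'e mat2 set \<Rightarrow> 'e mat2 set" where
  "coset_shift \<beta> C = coset (mmul (coset_rep C) \<beta>)"

lemma coset_shift_cosets: "\<beta> \<in> B \<inter> K \<Longrightarrow> C \<in> cosets \<Longrightarrow> coset_shift \<beta> C \<in> cosets"
  unfolding coset_shift_def cosets_def using coset_rep(1) BK_mmul by (metis cosets_def image_eqI)

lemma coset_shift_ginv:
  assumes \<beta>: "\<beta> \<in> B \<inter> K" and C: "C \<in> cosets"
  shows "coset_shift (ginv \<beta>) (coset_shift \<beta> C) = C"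
proof -
  have r: "coset_rep C \<in> B \<inter> K" using coset_rep C by blast
  obtain n where n: "n \<in> B \<inter> Kd d" "coset_rep (coset_shift \<beta> C) = mmul (mmul (coset_rep C) \<beta>) n"
    using coset_rep_coset[of "mmul (coset_rep C) \<beta>"] r \<beta> BK_mmul unfolding coset_shift_def by blast
  have "mmul (coset_rep (coset_shift \<beta> C)) (ginv \<beta>) = mmul (coset_rep C) (mmul \<beta> (mmul n (ginv \<beta>)))"
    using n(2) by (simp add: mmul_assoc)
  moreover have "mmul \<beta> (mmul n (ginv \<beta>)) \<in> B \<inter> Kd d"
    using BKd_conj[OF BK_ginv[OF \<beta>] n(1)] by simp
  ultimately have "mmul (coset_rep (coset_shift \<beta> C)) (ginv \<beta>) \<in> coset (coset_rep C)"
    unfolding coset_def by blast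
  then show ?thesis unfolding coset_shift_def[of "ginv \<beta>"] using coset_eq[OF r] coset_rep[OF C] by simp
qed

lemma bij_coset_shift: "\<beta> \<in> B \<inter> K \<Longrightarrow> bij_betw (coset_shift \<beta>) cosets cosets"
  using coset_shift_ginv[of \<beta>] coset_shift_ginv[of "ginv \<beta>"] coset_shift_cosets BK_ginv
  by (intro bij_betw_byWitness[where f' = "coset_shift (ginv \<beta>)"]) auto

text \<open>A finite form of averaging \<open>\<chi>(\<beta>)\<inverse> f(x \<beta>)\<close> over \<open>\<beta> \<in> B \<inter> K\<close>: the summand only
  depends on the coset of \<open>\<beta>\<close> modulo \<open>B \<inter> K\<^sub>d\<close>.\<close>

definition twisted_avg :: "'e mat2 \<Rightarrow> ('e mat2 \<Rightarrow> complex) \<Rightarrow> complex" where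
  "twisted_avg x f = (\<Sum>C\<in>cosets. inverse (chiB (coset_rep C)) * f (mmul x (coset_rep C)))"

lemma twisted_avg_term_coset:
  assumes f: "f \<in> W" and C: "C \<in> cosets" and \<gamma>: "\<gamma> \<in> C"
  shows "inverse (chiB (coset_rep C)) * f (mmul x (coset_rep C)) = inverse (chiB \<gamma>) * f (mmul x \<gamma>)"
proof -
  have summand: "inverse (chiB (mmul \<beta> n)) * f (mmul x (mmul \<beta> n)) = inverse (chiB \<beta>) * f (mmul x \<beta>)"
    if "\<beta> \<in> B \<inter> K" "n \<in> B \<inter> Kd d" for \<beta> n
    using chiB_mult[of \<beta> n] chiB_BKd[of n] W_right[OF f, of n "mmul x \<beta>"] that
    by (simp add: mmul_assoc)
  obtain \<beta> where \<beta>: "\<beta> \<in> B \<inter> K" "C = coset \<beta>" using C unfolding cosets_def by blast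
  obtain n1 where "n1 \<in> B \<inter> Kd d" "coset_rep C = mmul \<beta> n1"
    using coset_rep_coset \<beta> by blast
  moreover obtain n2 where "n2 \<in> B \<inter> Kd d" "\<gamma> = mmul \<beta> n2" using \<gamma> \<beta> unfolding coset_def by blast
  ultimately show ?thesis using summand \<beta>(1) by simp
qed

lemma twisted_avg_B_equivariant: assumes x: "x \<in> K" shows "B_equivariant (twisted_avg x)"
proof -
  have "twisted_avg x (rtrans \<beta> f) = chiB \<beta> * twisted_avg x f" if \<beta>: "\<beta> \<in> B \<inter> K" and f: "f \<in> W" for \<beta> f
  proof -
    define T where "T \<gamma> = inverse (chiB \<gamma>) * f (mmul x \<gamma>)" for \<gamma>
    have "twisted_avg x (rtrans \<beta> f) = (\<Sum>C\<in>cosets. chiB \<beta> * T (mmul (coset_rep C) \<beta>))"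
      unfolding twisted_avg_def T_def
    proof (rule sum.cong[OF refl])
      fix C assume "C \<in> cosets"
      then have "chiB (mmul (coset_rep C) \<beta>) = chiB (coset_rep C) * chiB \<beta>"
        using chiB_mult coset_rep(1) \<beta> by simp
      then show "inverse (chiB (coset_rep C)) * rtrans \<beta> f (mmul x (coset_rep C)) =
          chiB \<beta> * (inverse (chiB (mmul (coset_rep C) \<beta>)) * f (mmul x (mmul (coset_rep C) \<beta>)))"
        using chiB_nz[of \<beta>] \<beta> by (simp add: rtrans_apply mmul_assoc field_simps)
    qed
    also have "\<dots> = (\<Sum>C\<in>cosets. chiB \<beta> * T (coset_rep (coset_shift \<beta> C)))"
    proof (rule sum.cong[OF refl])
      fix C assume "C \<in> cosets"
      from twisted_avg_term_coset[OF f coset_shift_cosets[OF \<beta> this], of "mmul (coset_rep C) \<beta>"]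
      show "chiB \<beta> * T (mmul (coset_rep C) \<beta>) = chiB \<beta> * T (coset_rep (coset_shift \<beta> C))"
        using coset_self unfolding T_def coset_shift_def by simp
    qed
    also have "\<dots> = (\<Sum>C\<in>cosets. chiB \<beta> * T (coset_rep C))"
      using sum.reindex_bij_betw[OF bij_coset_shift[OF \<beta>], of "\<lambda>C. chiB \<beta> * T (coset_rep C)"] by simp
    finally show ?thesis unfolding twisted_avg_def T_def by (simp add: sum_distrib_left)
  qed
  moreover have "twisted_avg x (f + h) = twisted_avg x f + twisted_avg x h" for f h
    unfolding twisted_avg_def by (simp add: sum.distrib algebra_simps)
  moreover have "twisted_avg x (\<lambda>g. c * f g) = c * twisted_avg x f" for c f
    unfolding twisted_avg_def by (simp add: sum_distrib_left algebra_simps)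
  ultimately show ?thesis unfolding B_equivariant_def by blast
qed

lemma twisted_avg_dcoset_fun_other:
  assumes "\<And>\<beta>. \<beta> \<in> B \<inter> K \<Longrightarrow> mmul x \<beta> \<notin> dcoset y"
  shows "twisted_avg x (dcoset_fun y) = 0"
  unfolding twisted_avg_def using assms coset_rep(1) dcoset_fun_out by simp

text \<open>By compatibility every summand is \<open>0\<close> or \<open>1\<close>, and the trivial coset contributes \<open>1\<close>.\<close>

lemma twisted_avg_dcoset_fun_self:
  assumes x: "x \<in> K" and compat: "compatible x"
  shows "twisted_avg x (dcoset_fun x) \<noteq> 0"
proof -
  have "twisted_avg x (dcoset_fun x) = (\<Sum>C\<in>cosets. if mmul x (coset_rep C) \<in> dcoset x then 1 else 0)"
    unfolding twisted_avg_def
  proof (rule sum.cong[OF refl])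
    fix C assume C: "C \<in> cosets"
    show "inverse (chiB (coset_rep C)) * dcoset_fun x (mmul x (coset_rep C)) =
        (if mmul x (coset_rep C) \<in> dcoset x then 1 else 0)"
    proof (cases "mmul x (coset_rep C) \<in> dcoset x")
      case True
      then obtain b k where bk: "b \<in> B" "k \<in> Kd d" "mmul x (coset_rep C) = mmul b (mmul x k)"
        by (rule dcosetE)
      then have "chiB (coset_rep C) = chiB b" using compat coset_rep(1)[OF C] unfolding compatible_def by blast
      then show ?thesis using True bk dcoset_fun_eq[OF x bk(1,2)] chiB_nz[OF bk(1)] by simp
    qed (simp add: dcoset_fun_out)
  qed
  also have "\<dots> = of_nat (card {C\<in>cosets. mmul x (coset_rep C) \<in> dcoset x})"
    using finite_cosets by (simp add: sum.If_cases Int_def conj_commute)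
  finally have e: "twisted_avg x (dcoset_fun x) = of_nat (card {C\<in>cosets. mmul x (coset_rep C) \<in> dcoset x})" .
  have C0: "coset Imat \<in> cosets" unfolding cosets_def using B_Imat K_Imat by blast
  obtain n where n: "n \<in> B \<inter> Kd d" "coset_rep (coset Imat) = mmul Imat n"
    using coset_rep_coset B_Imat K_Imat by blast
  then have "mmul x (coset_rep (coset Imat)) \<in> dcoset x" using dcosetI[OF B_Imat, of n x] by simp
  then have "card {C\<in>cosets. mmul x (coset_rep C) \<in> dcoset x} \<noteq> 0"
    using C0 finite_cosets by (auto simp: card_eq_0_iff)
  then show ?thesis using e by simp
qed

section \<open>Counting intertwiners\<close>

interpretation Hspace: vector_space "\<lambda>(c::complex) (\<phi>::('e mat2 \<Rightarrow> complex) \<Rightarrow> ('e mat2 \<Rightarrow> complex)).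
    \<lambda>f g. c * \<phi> f g"
  by (rule vector_space_pointwise_scale)

lemma Hom_subspace: "Hspace.subspace Hom"
  unfolding Hspace.subspace_def
proof (intro conjI ballI allI)
  have "(\<lambda>g. 0::complex) \<in> W" using W_zero unfolding zero_fun_def .
  then show "0 \<in> Hom" by (simp add: Hom_iff rtrans_def fun_eq_iff zero_fun_def)
  fix \<phi> \<psi> assume \<phi>: "\<phi> \<in> Hom" and \<psi>: "\<psi> \<in> Hom"
  have "rtrans k (\<phi> f + \<psi> f) = rtrans k (\<phi> f) + rtrans k (\<psi> f)" for k f
    by (simp add: rtrans_def plus_fun_def)
  then show "\<phi> + \<psi> \<in> Hom"
    using \<phi> \<psi> unfolding Hom_iff by (auto simp: W_add fun_eq_iff algebra_simps)
  fix c :: complex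
  have "rtrans k (\<lambda>g. c * \<phi> f g) = (\<lambda>g. c * rtrans k (\<phi> f) g)" for k f
    by (simp add: rtrans_def)
  then show "(\<lambda>f g. c * \<phi> f g) \<in> Hom"
    using \<phi> unfolding Hom_iff by (auto simp: W_scale fun_eq_iff algebra_simps)
qed

definition restr :: "'e mat2 set \<Rightarrow> ('e mat2 \<Rightarrow> complex) \<Rightarrow> ('e mat2 \<Rightarrow> complex)" where
  "restr D f = (\<lambda>g. if g \<in> D then f g else 0)"

lemma restr_dcoset_W: assumes "G x" "f \<in> W" shows "restr (dcoset x) f \<in> W"
  using assms dcoset_left_iff dcoset_right_iff unfolding W_iff restr_def by auto

lemma restr_dcoset_eq:
  assumes x: "x \<in> K" and \<beta>: "\<beta> \<in> B \<inter> K" and f: "f \<in> W"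
  shows "restr (dcoset (mmul x \<beta>)) f = (\<lambda>g. f (mmul x \<beta>) * rtrans (ginv \<beta>) (dcoset_fun x) g)"
proof -
  have G\<beta>: "G \<beta>" and Gx\<beta>: "G (mmul x \<beta>)" using x \<beta> K_G G_mmul by auto
  have "mmul (mmul x \<beta>) (ginv \<beta>) \<in> dcoset x" using G\<beta> dcoset_self by simp
  then have "rtrans (ginv \<beta>) (dcoset_fun x) g = 0" if "g \<notin> dcoset (mmul x \<beta>)" for g
    using rtrans_dcoset_fun_out[OF x _ Gx\<beta>] K_ginv \<beta> that by blast
  moreover have "rtrans (ginv \<beta>) (dcoset_fun x) (mmul x \<beta>) = 1"
    using G\<beta> dcoset_fun_self[OF x] by (simp add: rtrans_apply mmul_assoc ginv_right)
  moreover have "restr (dcoset (mmul x \<beta>)) f (mmul x \<beta>) = f (mmul x \<beta>)"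
    using dcoset_self by (simp add: restr_def)
  ultimately show ?thesis
    using W_supported_on_dcoset[OF Gx\<beta> restr_dcoset_W[OF Gx\<beta> f] W_rtrans[OF dcoset_fun_W[OF x]]]
      K_ginv \<beta> by (simp add: restr_def)
qed

text \<open>Double cosets are equal or disjoint (\<open>dcoset_eq\<close>), so the restrictions add up to \<open>f\<close>.\<close>

lemma W_eq_sum_restr:
  assumes fin: "finite \<D>" and \<D>: "\<And>D. D \<in> \<D> \<Longrightarrow> \<exists>y. G y \<and> D = dcoset y"
    and cover: "\<And>g. G g \<Longrightarrow> dcoset g \<in> \<D>" and f: "f \<in> W"
  shows "f = (\<Sum>D\<in>\<D>. restr D f)"
proof
  fix g
  have "(\<Sum>D\<in>\<D>. restr D f) g = (\<Sum>D\<in>\<D>. restr D f g)"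
    using fin by (induction \<D> rule: finite_induct) simp_all
  also have "\<dots> = f g"
  proof (cases "G g")
    case True
    have "g \<in> D \<longleftrightarrow> D = dcoset g" if "D \<in> \<D>" for D
      using \<D>[OF that] dcoset_eq dcoset_self by blast
    then have "(\<Sum>D\<in>\<D>. restr D f g) = (\<Sum>D\<in>\<D>. if D = dcoset g then f g else 0)"
      by (intro sum.cong) (auto simp: restr_def)
    then show ?thesis using fin cover[OF True] by simp
  next
    case False
    then have "restr D f g = 0" if "D \<in> \<D>" for D
      using \<D>[OF that] dcoset_G by (auto simp: restr_def)
    then show ?thesis using W_out[OF f False] by simp
  qed
  finally show "f g = (\<Sum>D\<in>\<D>. restr D f) g" ..
qed

lemma dcoset_coset_rep:
  assumes "G x" "\<beta> \<in> B \<inter> K"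
  shows "dcoset (mmul x (coset_rep (coset \<beta>))) = dcoset (mmul x \<beta>)"
proof -
  obtain n where n: "n \<in> B \<inter> Kd d" "coset_rep (coset \<beta>) = mmul \<beta> n"
    using coset_rep_coset[OF assms(2)] by blast
  then have "mmul x (coset_rep (coset \<beta>)) \<in> dcoset (mmul x \<beta>)"
    using dcosetI[OF B_Imat, of n "mmul x \<beta>"] by (simp add: mmul_assoc)
  moreover have "G (mmul x \<beta>)" using assms K_G G_mmul by blast
  ultimately show ?thesis using dcoset_eq by blast
qed

lemma B_equivariant_eq_zero:
  assumes R: "finite R" "R \<subseteq> K"
    and cover: "\<And>g. G g \<Longrightarrow> \<exists>x\<in>R. \<exists>\<beta>\<in>B \<inter> K. g \<in> dcoset (mmul x \<beta>)"
    and l: "B_equivariant l" and zero: "\<And>x. x \<in> R \<Longrightarrow> l (dcoset_fun x) = 0"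
    and f: "f \<in> W"
  shows "l f = 0"
proof -
  define \<D> where "\<D> = (\<lambda>(x, C). dcoset (mmul x (coset_rep C))) ` (R \<times> cosets)"
  have \<D>: "\<exists>x\<in>R. \<exists>\<beta>\<in>B \<inter> K. D = dcoset (mmul x \<beta>)" if "D \<in> \<D>" for D
    using that coset_rep(1) unfolding \<D>_def by fastforce
  have cov: "dcoset g \<in> \<D>" if g: "G g" for g
  proof -
    obtain x \<beta> where x\<beta>: "x \<in> R" "\<beta> \<in> B \<inter> K" "g \<in> dcoset (mmul x \<beta>)" using cover[OF g] by blast
    have Gx: "G x" "G (mmul x \<beta>)" using x\<beta> R K_G G_mmul by auto
    have "dcoset g = dcoset (mmul x (coset_rep (coset \<beta>)))"
      using dcoset_coset_rep[OF Gx(1) x\<beta>(2)] dcoset_eq[OF Gx(2) x\<beta>(3)] by simp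
    moreover have "coset \<beta> \<in> cosets" using x\<beta>(2) unfolding cosets_def by blast
    ultimately show ?thesis using x\<beta>(1) unfolding \<D>_def by force
  qed
  have fin: "finite \<D>" using R(1) finite_cosets by (simp add: \<D>_def)
  have \<D>G: "\<exists>y. G y \<and> D = dcoset y" if "D \<in> \<D>" for D
    using \<D>[OF that] R(2) K_G G_mmul by blast
  have "l f = l (\<Sum>D\<in>\<D>. restr D f)" by (rule arg_cong[OF W_eq_sum_restr[OF fin \<D>G cov f]])
  also have "\<dots> = (\<Sum>D\<in>\<D>. l (restr D f))"
  proof (rule B_equivariant_sum[OF l fin])
    fix D assume "D \<in> \<D>"
    then obtain y where "G y" "D = dcoset y" using \<D>G by blast
    then show "restr D f \<in> W" using restr_dcoset_W f by simp
  qed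
  also have "\<dots> = 0"
  proof (intro sum.neutral ballI)
    fix D assume "D \<in> \<D>"
    then obtain x \<beta> where x\<beta>: "x \<in> R" "\<beta> \<in> B \<inter> K" "D = dcoset (mmul x \<beta>)" using \<D> by blast
    then have x: "x \<in> K" using R by blast
    have "l (restr D f) = f (mmul x \<beta>) * l (rtrans (ginv \<beta>) (dcoset_fun x))"
      using restr_dcoset_eq[OF x x\<beta>(2) f] l W_rtrans[OF dcoset_fun_W[OF x]] K_ginv x\<beta>(2,3)
      by (simp add: B_equivariant_def)
    also have "l (rtrans (ginv \<beta>) (dcoset_fun x)) = chiB (ginv \<beta>) * l (dcoset_fun x)"
      using l BK_ginv[OF x\<beta>(2)] dcoset_fun_W[OF x] by (simp add: B_equivariant_def)
    finally show "l (restr D f) = 0" using zero[OF x\<beta>(1)] by simp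
  qed
  finally show ?thesis .
qed

text \<open>Given representatives \<open>R\<close> of the double cosets \<open>B x K\<^sub>d\<close> up to right
  multiplication by \<open>B \<inter> K\<close>, the functionals \<open>\<phi> \<mapsto> evI \<phi> (dcoset_fun x)\<close> for compatible
  \<open>x \<in> R\<close> are dual to the intertwiners attached to \<open>twisted_avg x\<close>.\<close>

theorem dim_Hom_eq_card_compatible:
  assumes R: "finite R" "R \<subseteq> K"
    and cover: "\<And>g. G g \<Longrightarrow> \<exists>x\<in>R. \<exists>\<beta>\<in>B \<inter> K. g \<in> dcoset (mmul x \<beta>)"
    and disjoint: "\<And>x y \<beta>. x \<in> R \<Longrightarrow> y \<in> R \<Longrightarrow> x \<noteq> y \<Longrightarrow> \<beta> \<in> B \<inter> K \<Longrightarrow> mmul x \<beta> \<notin> dcoset y"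
  shows "cdimH Hom = card {x\<in>R. compatible x}"
  unfolding cdimH_def
proof (rule Hspace.dim_eq_card_biorthogonal[OF Hom_subspace])
  let ?J = "{x\<in>R. compatible x}"
  define e where "e x \<phi> = evI \<phi> (dcoset_fun x)" for x \<phi>
  define N where "N x = twisted_avg x (dcoset_fun x)" for x
  define b where "b x = (\<lambda>f g. inverse (N x) * Hom_of_functional (twisted_avg x) f g)" for x
  have xK: "x \<in> K" if "x \<in> ?J" for x using that R by blast
  show "finite ?J" using R by simp
  show "b x \<in> Hom" if "x \<in> ?J" for x
    using Hspace.subspace_scale[OF Hom_subspace Hom_of_functional_Hom[OF twisted_avg_B_equivariant]]
      xK[OF that] unfolding b_def by blast
  show "e x (\<phi> + \<psi>) = e x \<phi> + e x \<psi>" "e x (\<lambda>f g. c * \<phi> f g) = c * e x \<phi>" for x \<phi> \<psi> c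
    by (simp_all add: e_def evI_def)
  show "e x (b y) = (if x = y then 1 else 0)" if "x \<in> ?J" "y \<in> ?J" for x y
  proof -
    have "e x (b y) = inverse (N y) * twisted_avg y (dcoset_fun x)"
      using evI_Hom_of_functional[OF twisted_avg_B_equivariant dcoset_fun_W] xK that
      by (simp add: e_def b_def evI_def)
    moreover have "twisted_avg y (dcoset_fun x) = 0" if "x \<noteq> y"
      using twisted_avg_dcoset_fun_other disjoint \<open>x \<in> ?J\<close> \<open>y \<in> ?J\<close> that by auto
    moreover have "N y \<noteq> 0" using twisted_avg_dcoset_fun_self xK that unfolding N_def by blast
    ultimately show ?thesis unfolding N_def by auto
  qed
  show "\<phi> = 0" if \<phi>: "\<phi> \<in> Hom" and zero: "\<And>x. x \<in> ?J \<Longrightarrow> e x \<phi> = 0" for \<phi>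
  proof (rule Hom_eq_zero[OF \<phi>], rule B_equivariant_eq_zero[OF R cover evI_B_equivariant[OF \<phi>]])
    fix x assume "x \<in> R"
    then show "evI \<phi> (dcoset_fun x) = 0"
      using zero B_equivariant_incompatible[OF _ evI_B_equivariant[OF \<phi>]] R unfolding e_def by blast
  qed
qed

section \<open>Explicit double coset representatives\<close>

definition xrep :: "nat \<Rightarrow> 'e mat2" where "xrep j = lower_unip (s * pi ^ j)"

lemma s_pi_power: "s * pi ^ j + cj (s * pi ^ j) = 0" "P j (s * pi ^ j)"
  "v (s * pi ^ j) = int j" "s * pi ^ j \<noteq> 0"
  using pi s_nz P_Omult[OF O_consts(1) P_pi_power] by (simp_all add: cj_simps v_mult v_power v_s)

lemma xrep_K: "xrep j \<in> K"
  unfolding xrep_def using lower_unip_Kd[OF s_pi_power(1,2)] Kd_K[of _ j] by blast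

text \<open>The valuation of the row ratio is an invariant of the double coset: it is preserved by
  \<open>B\<close> on the left and by \<open>K\<^sub>d\<close> and \<open>B \<inter> K\<close> on the right.\<close>

definition row_ratio_in :: "nat \<Rightarrow> 'e mat2 \<Rightarrow> bool" where
  "row_ratio_in m g \<longleftrightarrow> (\<exists>x. P m x \<and> ent21 g = x * ent22 g)"

lemma row_ratio_in_B_left: assumes "b \<in> B" "row_ratio_in m g" shows "row_ratio_in m (mmul b g)"
proof -
  obtain a x e where "b = M2 a x 0 e" using B_M2 assms(1) by blast
  then show ?thesis using assms(2) unfolding row_ratio_in_def by (cases g) auto
qed

lemma row_ratio_in_right:
  assumes k: "Oi k11" "Oi k12" "P m k21" "unit k22" and "1 \<le> m" and g: "row_ratio_in m g"
  shows "row_ratio_in m (mmul g (M2 k11 k12 k21 k22))"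
proof -
  obtain x where x: "P m x" "ent21 g = x * ent22 g" using g unfolding row_ratio_in_def by blast
  obtain g1 g2 e where gM: "g = M2 g1 g2 (x * e) e" using x by (cases g) auto
  define u where "u = k22 + x * k12"
  have "P 1 (x * k12)" using P_multO[OF P_mono[OF \<open>1 \<le> m\<close> x(1)] k(2)] .
  then have u: "unit u" unfolding u_def using unit_add_P1[OF k(4)] by blast
  have "ent21 (mmul g (M2 k11 k12 k21 k22)) = ((x * k11 + k21) / u) * ent22 (mmul g (M2 k11 k12 k21 k22))"
    using unit_nz[OF u] gM by (simp add: u_def field_simps)
  moreover have "P m ((x * k11 + k21) / u)"
    using P_div_unit[OF P_add[OF P_multO[OF x(1) k(1)] k(3)] u] .
  ultimately show ?thesis unfolding row_ratio_in_def by blast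
qed

lemma row_ratio_in_BK_right:
  assumes "\<beta> \<in> B \<inter> K" "1 \<le> m" "row_ratio_in m g"
  shows "row_ratio_in m (mmul g \<beta>)"
proof -
  obtain a x e where \<beta>: "\<beta> = M2 a x 0 e" using B_M2 assms(1) by blast
  have "unit a" "e = inverse (cj a)" using BK_unit[of \<beta>] B_entries[of a x e] assms(1) \<beta> by auto
  then have "unit e" by (simp add: unit_inverse unit_cj)
  then show ?thesis
    using row_ratio_in_right[OF _ _ _ _ assms(2,3)] assms(1) \<beta> by (simp add: K_iff)
qed

lemma row_ratio_in_Kd_right:
  assumes "k \<in> Kd d" "1 \<le> m" "m \<le> d" "row_ratio_in m g"
  shows "row_ratio_in m (mmul g k)"
proof -
  obtain k11 k12 k21 k22 where kM: "k = M2 k11 k12 k21 k22" by (cases k)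
  have "P d (k22 - 1)" "P d k21" "Oi k11" "Oi k12" using assms(1) kM by (auto simp: Kd_iff K_iff Imat_def)
  then show ?thesis
    using row_ratio_in_right[OF _ _ _ _ assms(2,4)] P_mono[OF assms(3)] unit_if_P_diff_1[OF d_pos] kM
    by simp
qed

lemma row_ratio_in_dcoset:
  assumes "G y" "g \<in> dcoset y" "1 \<le> m" "m \<le> d"
  shows "row_ratio_in m g \<longleftrightarrow> row_ratio_in m y"
proof -
  obtain b k where bk: "b \<in> B" "k \<in> Kd d" "g = mmul b (mmul y k)" using assms(2) by (rule dcosetE)
  have "y = mmul (ginv b) (mmul g (ginv k))"
    using bk B_G K_G Kd_K by (simp add: mmul_assoc ginv_right)
  then show ?thesis
    using bk row_ratio_in_B_left row_ratio_in_Kd_right assms B_ginv Kd_ginv by (metis mmul_assoc)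
qed

lemma row_ratio_in_xrep: "row_ratio_in m (xrep j) \<longleftrightarrow> m \<le> j"
proof -
  have "row_ratio_in m (xrep j) \<longleftrightarrow> P m (s * pi ^ j)"
    unfolding row_ratio_in_def xrep_def lower_unip_def by simp
  also have "\<dots> \<longleftrightarrow> m \<le> j" using s_pi_power(3,4)[of j] by (auto simp: inP_def)
  finally show ?thesis .
qed

lemma xrep_dcoset_disjoint:
  assumes "i \<le> d" "j \<le> d" "i \<noteq> j" "\<beta> \<in> B \<inter> K"
  shows "mmul (xrep i) \<beta> \<notin> dcoset (xrep j)"
proof
  assume a: "mmul (xrep i) \<beta> \<in> dcoset (xrep j)"
  define m where "m = max i j"
  have m: "1 \<le> m" "m \<le> d" using assms unfolding m_def by auto
  have "row_ratio_in m (mmul (xrep i) \<beta>) \<longleftrightarrow> row_ratio_in m (xrep j)"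
    using row_ratio_in_dcoset[OF K_G[OF xrep_K] a m] .
  moreover have "row_ratio_in m (mmul (xrep i) \<beta>) \<longleftrightarrow> row_ratio_in m (xrep i)"
    using row_ratio_in_BK_right[OF assms(4) m(1)]
      row_ratio_in_BK_right[OF BK_ginv[OF assms(4)] m(1), of "mmul (xrep i) \<beta>"] K_G assms(4)
    by auto
  ultimately have "m \<le> i \<longleftrightarrow> m \<le> j" using row_ratio_in_xrep by simp
  then show False using assms(3) unfolding m_def by (auto simp: max_def split: if_splits)
qed

lemma dcoset_of_close_ratio:
  assumes k: "G k" "ent22 k \<noteq> 0" and z: "G z" "ent22 z \<noteq> 0"
    and close: "P d (ent21 k / ent22 k - ent21 z / ent22 z)"
  shows "k \<in> dcoset z"
proof -
  define t where "t = ent21 k / ent22 k"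
  define y where "y = ent21 z / ent22 z"
  define b1 where "b1 = mmul k (ginv (lower_unip t))"
  define b2 where "b2 = mmul z (ginv (lower_unip y))"
  have b1: "b1 \<in> B" and t: "t + cj t = 0"
    using lower_unip_row_ratio[OF k] unfolding t_def b1_def by auto
  have b2: "b2 \<in> B" and y: "y + cj y = 0"
    using lower_unip_row_ratio[OF z] unfolding y_def b2_def by auto
  have "(t - y) + cj (t - y) = (t + cj t) - (y + cj y)" by (simp add: cj_diff algebra_simps)
  then have "(t - y) + cj (t - y) = 0" using t y by simp
  then have kd: "lower_unip (t - y) \<in> Kd d" using lower_unip_Kd close unfolding t_def y_def by simp
  have Gt: "G (lower_unip t)" "G (lower_unip y)" using t y G_lower_unip by auto
  have "k = mmul (mmul b1 (ginv b2)) (mmul z (lower_unip (t - y)))"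
    using Gt z unfolding b1_def b2_def by (simp add: lower_unip_mmul ginv_mmul mmul_assoc ginv_left)
  then show ?thesis using dcosetI[OF B_mmul[OF b1 B_ginv[OF b2]] kd] by simp
qed

lemma dcoset_cover_unit_entry:
  assumes k: "k \<in> K" and c: "unit (ent21 k)"
  shows "\<exists>\<beta>\<in>B \<inter> K. k \<in> dcoset (mmul (xrep 0) \<beta>)"
proof -
  obtain a x c e where kM: "k = M2 a x c e" by (cases k)
  have Gk: "G k" using k K_G by blast
  have c: "unit c" "c \<noteq> 0" using assms kM unit_nz by auto
  have e: "Oi e" using k kM by (simp add: K_iff)
  define z where "z = e / c - 1 / s"
  have "e / c + cj (e / c) = (c * cj e + e * cj c) / (c * cj c)"
    using c by (simp add: cj_divide field_simps)
  moreover have "c * cj e + e * cj c = 0" using G_bottom_row_isotropic Gk kM by blast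
  moreover have "1 / s + cj (1 / s) = 0" using s_nz by (simp add: cj_simps)
  ultimately have "z + cj z = 0" unfolding z_def by (simp add: cj_simps algebra_simps)
  moreover have "Oi z"
    unfolding z_def using P_div_unit[OF e c(1)] P_div_unit[OF O_1 unit_consts(1)] P_diff by blast
  ultimately have \<beta>: "upper_unip z \<in> B \<inter> K"
    using G_upper_unip by (simp add: B_iff K_iff upper_unip_def)
  let ?y = "mmul (xrep 0) (upper_unip z)"
  have Gy: "G ?y" using xrep_K \<beta> K_G G_mmul by blast
  have "ent21 k * ent22 ?y = ent22 k * ent21 ?y"
    using kM c s_nz by (simp add: xrep_def lower_unip_def upper_unip_def z_def field_simps)
  then have "mmul k (ginv ?y) \<in> B" using same_row_B[OF Gk Gy] by blast
  then have "k \<in> dcoset ?y" using dcosetI[OF _ Kd_Imat, of "mmul k (ginv ?y)" ?y] Gy by simp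
  then show ?thesis using \<beta> by blast
qed

lemma dcoset_cover_ratio_in_Pd:
  assumes k: "k \<in> K" "ent22 k \<noteq> 0" and t: "P d (ent21 k / ent22 k)"
  shows "k \<in> dcoset (xrep d)"
proof (rule dcoset_of_close_ratio[OF K_G[OF k(1)] k(2) K_G[OF xrep_K]])
  show "ent22 (xrep d) \<noteq> 0" by (simp add: xrep_def lower_unip_def)
  show "P d (ent21 k / ent22 k - ent21 (xrep d) / ent22 (xrep d))"
    using P_diff[OF t s_pi_power(2)] by (simp add: xrep_def lower_unip_def)
qed

text \<open>If the row ratio \<open>t\<close> has valuation \<open>0 < j < d\<close>, then \<open>t = s \<pi>\<^sup>j w\<close> with \<open>w\<close> a unit of
  \<open>F\<close>; writing \<open>w\<close> as a norm \<open>\<alpha> cj \<alpha>\<close> modulo \<open>p\<^sup>d\<^sup>-\<^sup>j\<close> moves \<open>k\<close> into \<open>B xrep j t(\<alpha>) K\<^sub>d\<close>.\<close>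

lemma dcoset_cover_ratio_valuation:
  assumes k: "k \<in> K" "ent22 k \<noteq> 0" and t: "ent21 k \<noteq> 0" "v (ent21 k / ent22 k) = int j"
    and j: "j < d"
  shows "\<exists>\<beta>\<in>B \<inter> K. k \<in> dcoset (mmul (xrep j) \<beta>)"
proof -
  define t where "t = ent21 k / ent22 k"
  define w where "w = t / (s * pi ^ j)"
  have tnz: "t \<noteq> 0" using t k unfolding t_def by simp
  have "v w = 0"
    using v_divide[OF tnz s_pi_power(4)] t(2) s_pi_power(3) unfolding w_def t_def by simp
  moreover have "w \<noteq> 0" using tnz s_pi_power(4) unfolding w_def by simp
  ultimately have uw: "unit w" by (simp add: unit_def)
  have "cj t = - t" using lower_unip_row_ratio(1)[OF K_G[OF k(1)] k(2)] unfolding t_def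
    by (simp add: add_eq_0_iff)
  then have cw: "cj w = w" unfolding w_def by (simp add: cj_simps pi(2))
  obtain \<alpha> where \<alpha>: "unit \<alpha>" "P (Suc (d - j - 1)) (\<alpha> * cj \<alpha> - w)"
    using norm_surj_mod_P[OF uw cw] by blast
  have d_j: "Suc (d - j - 1) = d - j" using j by simp
  have anz: "\<alpha> \<noteq> 0" using \<alpha> unit_nz by blast
  let ?z = "mmul (xrep j) (torus \<alpha>)"
  have "k \<in> dcoset ?z"
  proof (rule dcoset_of_close_ratio[OF K_G[OF k(1)] k(2)])
    show "G ?z" using xrep_K torus_BK[OF \<alpha>(1)] K_G G_mmul by blast
    show "ent22 ?z \<noteq> 0" using anz by (simp add: xrep_def lower_unip_def torus_def)
    have "ent21 k / ent22 k - ent21 ?z / ent22 ?z = s * pi ^ j * (w - \<alpha> * cj \<alpha>)"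
      using anz s_pi_power(4) pi(1) unfolding w_def t_def
      by (simp add: xrep_def lower_unip_def torus_def field_simps)
    moreover have "P (j + (d - j)) (s * pi ^ j * (w - \<alpha> * cj \<alpha>))"
      using P_mult[OF s_pi_power(2)] \<alpha>(2) d_j P_diff_commute by metis
    ultimately show "P d (ent21 k / ent22 k - ent21 ?z / ent22 ?z)" using j by simp
  qed
  then show ?thesis using torus_BK[OF \<alpha>(1)] by blast
qed

lemma dcoset_cover_K: assumes k: "k \<in> K" shows "\<exists>j\<le>d. \<exists>\<beta>\<in>B \<inter> K. k \<in> dcoset (mmul (xrep j) \<beta>)"
proof (cases "unit (ent21 k)")
  case True
  then show ?thesis using dcoset_cover_unit_entry[OF k] by blast
next
  case False
  obtain a x c e where kM: "k = M2 a x c e" by (cases k)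
  have O: "Oi a" "Oi x" "Oi c" "Oi e" using k kM by (auto simp: K_iff)
  have c: "P 1 c" using False O kM P1_if_not_unit by simp
  have "cj a * e + cj c * x = 1" using k kM by (simp add: K_iff G_iff)
  then have e: "unit e"
    using c O P_cj P1_if_not_unit unit_not_P1[OF unit_1] by (metis P_add P_Omult P_multO)
  define t where "t = c / e"
  have ek: "ent22 k \<noteq> 0" using e unit_nz kM by simp
  show ?thesis
  proof (cases "P d t")
    case True
    then have "k \<in> dcoset (xrep d)" using dcoset_cover_ratio_in_Pd[OF k ek] kM by (simp add: t_def)
    then show ?thesis using B_Imat K_Imat by (intro exI[of _ d]) (auto intro!: bexI[of _ Imat])
  next
    case False
    have "P 1 t" unfolding t_def using P_div_unit[OF c e] .
    moreover have "t \<noteq> 0" using False by (auto simp: inP_def)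
    ultimately have vt: "v t = int (nat (v t))" and lt: "nat (v t) < d"
      using False by (auto simp: inP_def)
    have "ent21 k \<noteq> 0" using \<open>t \<noteq> 0\<close> kM unfolding t_def by auto
    then have "\<exists>\<beta>\<in>B \<inter> K. k \<in> dcoset (mmul (xrep (nat (v t))) \<beta>)"
      using dcoset_cover_ratio_valuation[OF k ek _ _ lt] vt kM unfolding t_def by simp
    then show ?thesis using lt by (intro exI[of _ "nat (v t)"]) auto
  qed
qed

lemma dcoset_cover: assumes "G g" shows "\<exists>j\<le>d. \<exists>\<beta>\<in>B \<inter> K. g \<in> dcoset (mmul (xrep j) \<beta>)"
proof -
  obtain b k where bk: "b \<in> B" "k \<in> K" "g = mmul b k" using iwasawa[OF assms] by blast
  then show ?thesis using dcoset_cover_K dcoset_left by blast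
qed

section \<open>Which double cosets support intertwiners\<close>

text \<open>Substituting \<open>\<kappa> = x k\<inverse> x\<inverse>\<close>, the condition \<open>x \<beta> = b x k\<close> becomes
  \<open>b = (x \<beta> x\<inverse>) \<kappa>\<close>.\<close>

lemma compatible_iff_conj:
  assumes x: "x \<in> K"
  shows "compatible x \<longleftrightarrow> (\<forall>\<beta>\<in>B \<inter> K. \<forall>\<kappa>\<in>Kd d.
    mmul (mmul x (mmul \<beta> (ginv x))) \<kappa> \<in> B \<longrightarrow> chiB \<beta> = chiB (mmul (mmul x (mmul \<beta> (ginv x))) \<kappa>))"
proof -
  have Gx: "G x" using x K_G by blast
  show ?thesis
  proof
    assume compat: "compatible x"
    show "\<forall>\<beta>\<in>B \<inter> K. \<forall>\<kappa>\<in>Kd d. mmul (mmul x (mmul \<beta> (ginv x))) \<kappa> \<in> B \<longrightarrow>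
      chiB \<beta> = chiB (mmul (mmul x (mmul \<beta> (ginv x))) \<kappa>)"
    proof (intro ballI impI)
      fix \<beta> \<kappa> assume \<beta>: "\<beta> \<in> B \<inter> K" and \<kappa>: "\<kappa> \<in> Kd d"
        and b: "mmul (mmul x (mmul \<beta> (ginv x))) \<kappa> \<in> B"
      have G\<kappa>: "G \<kappa>" using \<kappa> Kd_K K_G by blast
      define k where "k = mmul (ginv x) (mmul (ginv \<kappa>) x)"
      have "k \<in> Kd d" unfolding k_def using Kd_conj'[OF x Kd_ginv[OF \<kappa>]] .
      moreover have "mmul x \<beta> = mmul (mmul (mmul x (mmul \<beta> (ginv x))) \<kappa>) (mmul x k)"
        unfolding k_def using Gx G\<kappa> by (simp add: mmul_assoc ginv_left)
      ultimately show "chiB \<beta> = chiB (mmul (mmul x (mmul \<beta> (ginv x))) \<kappa>)"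
        using compat \<beta> b unfolding compatible_def by blast
    qed
  next
    assume conj: "\<forall>\<beta>\<in>B \<inter> K. \<forall>\<kappa>\<in>Kd d. mmul (mmul x (mmul \<beta> (ginv x))) \<kappa> \<in> B \<longrightarrow>
      chiB \<beta> = chiB (mmul (mmul x (mmul \<beta> (ginv x))) \<kappa>)"
    show "compatible x" unfolding compatible_def
    proof (intro ballI impI)
      fix \<beta> b k assume \<beta>: "\<beta> \<in> B \<inter> K" and b: "b \<in> B" and k: "k \<in> Kd d"
        and e: "mmul x \<beta> = mmul b (mmul x k)"
      have Gk: "G k" using k Kd_K K_G by blast
      define \<kappa> where "\<kappa> = mmul x (mmul (ginv k) (ginv x))"
      have \<kappa>: "\<kappa> \<in> Kd d" unfolding \<kappa>_def using Kd_conj[OF x Kd_ginv[OF k]] .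
      have "mmul (mmul x (mmul \<beta> (ginv x))) \<kappa> = mmul (mmul (mmul x \<beta>) (ginv k)) (ginv x)"
        unfolding \<kappa>_def using Gx by (simp add: mmul_assoc)
      also have "\<dots> = b" unfolding e using Gx Gk by (simp add: mmul_assoc ginv_right)
      finally show "chiB \<beta> = chiB b" using conj \<beta> \<kappa> b by metis
    qed
  qed
qed

lemma xrep_conj:
  "mmul (xrep j) (mmul (M2 \<alpha> \<mu> 0 \<delta>) (ginv (xrep j))) =
    M2 (\<alpha> - \<mu> * (s * pi ^ j)) \<mu> (s * pi ^ j * (\<alpha> - \<mu> * (s * pi ^ j) - \<delta>)) (s * pi ^ j * \<mu> + \<delta>)"
  by (simp add: xrep_def lower_unip_def cj_simps pi(2) algebra_simps)

lemma chi_entry11_Kd: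
  assumes "unit \<alpha>" "unit a" "Oi \<mu>" "\<kappa> \<in> Kd d"
  shows "chi (\<alpha> * a * ent11 \<kappa> + \<mu> * ent21 \<kappa>) = chi \<alpha> * chi a"
proof -
  obtain \<kappa>11 \<kappa>12 \<kappa>21 \<kappa>22 where \<kappa>M: "\<kappa> = M2 \<kappa>11 \<kappa>12 \<kappa>21 \<kappa>22" by (cases \<kappa>)
  have \<kappa>: "P d (\<kappa>11 - 1)" "P d \<kappa>21" using assms(4) \<kappa>M by (auto simp: Kd_iff Imat_def)
  have ua: "unit (\<alpha> * a)" "\<alpha> * a \<noteq> 0" using unit_mult[OF assms(1,2)] unit_nz by blast+
  define u where "u = \<kappa>11 + \<mu> * \<kappa>21 / (\<alpha> * a)"
  have "P d (u - 1)"
    using P_add[OF \<kappa>(1) P_div_unit[OF P_Omult[OF assms(3) \<kappa>(2)] ua(1)]] unfolding u_def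
    by (simp add: algebra_simps)
  then have "u \<noteq> 0" "chi u = 1" using unit_nz unit_if_P_diff_1[OF d_pos] chi_trivial by blast+
  moreover have "\<alpha> * a * \<kappa>11 + \<mu> * \<kappa>21 = \<alpha> * a * u" using ua(2) by (simp add: u_def field_simps)
  ultimately show ?thesis using \<kappa>M chi_mult ua(2) unit_nz assms(1,2) by simp
qed

definition chi_trivial_S :: "nat \<Rightarrow> bool" where
  "chi_trivial_S j \<longleftrightarrow> (\<forall>a. cj a = a \<and> Tmem v j a \<longrightarrow> chi a = 1)"

lemma compatible_xrep_if_trivial:
  assumes triv: "chi_trivial_S j"
  shows "compatible (xrep j)"
  unfolding compatible_iff_conj[OF xrep_K]
proof (intro ballI impI)
  fix \<beta> \<kappa> assume \<beta>: "\<beta> \<in> B \<inter> K" and \<kappa>: "\<kappa> \<in> Kd d"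
    and b: "mmul (mmul (xrep j) (mmul \<beta> (ginv (xrep j)))) \<kappa> \<in> B"
  define y where "y = s * pi ^ j"
  obtain \<alpha> \<mu> \<delta> where \<beta>M: "\<beta> = M2 \<alpha> \<mu> 0 \<delta>" using B_M2 \<beta> by blast
  have O: "Oi \<alpha>" "Oi \<mu>" using \<beta> \<beta>M by (auto simp: K_iff)
  have u\<alpha>: "unit \<alpha>" "\<alpha> \<noteq> 0" using BK_unit[of \<beta>] \<beta> \<beta>M unit_nz by auto
  have \<delta>: "\<delta> = inverse (cj \<alpha>)" "cj \<mu> * \<delta> + cj \<delta> * \<mu> = 0"
    using B_entries(2)[of \<alpha> \<mu> \<delta>] \<beta> \<beta>M by (auto simp: B_iff G_iff)
  define z where "z = \<mu> / \<alpha>"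
  define a where "a = 1 - z * y"
  have "cj \<mu> / cj \<alpha> + \<mu> / \<alpha> = 0" using \<delta> u\<alpha>(2) by (simp add: cj_inverse divide_inverse mult.commute)
  then have "cj z = - z" unfolding z_def by (simp add: cj_divide eq_neg_iff_add_eq_0)
  then have ca: "cj a = a" unfolding a_def y_def by (simp add: cj_simps pi(2))
  have zO: "Oi z" unfolding z_def using P_div_unit[OF O(2) u\<alpha>(1)] .
  have Pa: "P j (a - 1)" unfolding a_def y_def using P_Omult[OF zO s_pi_power(2)] by simp
  define bb where "bb = mmul (mmul (xrep j) (mmul \<beta> (ginv (xrep j)))) \<kappa>"
  have b11: "ent11 bb = \<alpha> * a * ent11 \<kappa> + \<mu> * ent21 \<kappa>"
    using u\<alpha>(2) unfolding bb_def \<beta>M xrep_conj by (cases \<kappa>) (simp add: a_def z_def y_def field_simps)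
  have "bb \<in> B \<inter> K" using b \<beta> xrep_K \<kappa> Kd_K K_mmul K_ginv unfolding bb_def by simp
  then have "unit (ent11 bb)" using BK_unit by blast
  then have "unit (\<alpha> * a * ent11 \<kappa> + \<mu> * ent21 \<kappa>)" using b11 by simp
  moreover have "P 1 (\<mu> * ent21 \<kappa>)" using \<kappa> O d_pos P_mono
    by (cases \<kappa>) (auto simp: Kd_iff Imat_def intro!: P_Omult)
  ultimately have "unit (a * (\<alpha> * ent11 \<kappa>))"
    using unit_if_P1_diff[of _ "\<alpha> * a * ent11 \<kappa>"] by (simp add: algebra_simps)
  moreover have "Oi a" using P_add[OF P_O[OF Pa] O_1] by simp
  moreover have "Oi (\<alpha> * ent11 \<kappa>)" using O \<kappa> by (cases \<kappa>) (auto simp: Kd_iff K_iff intro: O_mult)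
  ultimately have "unit a" using unit_factor by blast
  then have "chi (ent11 bb) = chi \<alpha>"
    using chi_entry11_Kd[OF u\<alpha>(1) _ O(2) \<kappa>] triv ca Pa b11 unfolding chi_trivial_S_def Tmem_iff
    by simp
  then show "chiB \<beta> = chiB bb" using \<beta>M by (simp add: chiB_def)
qed

text \<open>If \<open>\<chi>(a) \<noteq> 1\<close> for some \<open>a \<in> F\<close> with \<open>a \<equiv> 1 (mod p\<^sup>j)\<close>, write
  \<open>1 - a = z s \<pi>\<^sup>j\<close> and \<open>a\<inverse> \<equiv> \<alpha> cj \<alpha> (mod p\<^sup>d\<^sup>-\<^sup>j)\<close>; then \<open>\<beta> = t(\<alpha>) u(z)\<close> is conjugated by
  \<open>xrep j\<close> into \<open>B K\<^sub>d\<close>, with a \<open>B\<close>-part on which \<open>\<chi>\<close> takes the value \<open>\<chi>(\<alpha>) \<chi>(a)\<close>.\<close>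

lemma not_compatible_xrep_if_nontrivial:
  assumes j: "j \<le> d" and nontriv: "\<not> chi_trivial_S j"
  shows "\<not> compatible (xrep j)"
proof -
  obtain a where a: "cj a = a" "unit a" "P j (a - 1)" "chi a \<noteq> 1"
    using nontriv unfolding chi_trivial_S_def Tmem_iff by blast
  have j: "j < d"
  proof (rule ccontr)
    assume "\<not> j < d"
    then have "j = d" using j by simp
    then show False using a chi_trivial[of a] unit_nz by blast
  qed
  define y where "y = s * pi ^ j"
  obtain z where z: "Oi z" "cj z = - z" "z * y = 1 - a"
    using trace_zero_factor[OF a(1,3)] unfolding y_def by blast
  have "Suc (d - j - 1) = d - j" using j by simp
  then obtain \<alpha> where \<alpha>: "unit \<alpha>" "P (d - j) (\<alpha> * cj \<alpha> - inverse a)"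
    using norm_surj_mod_P[of "inverse a" "d - j - 1"] a(1,2) unit_inverse by (auto simp: cj_inverse)
  define \<beta> where "\<beta> = M2 \<alpha> (\<alpha> * z) 0 (inverse (cj \<alpha>))"
  have "\<beta> = mmul (torus \<alpha>) (upper_unip z)" by (simp add: \<beta>_def torus_def upper_unip_def)
  then have \<beta>: "\<beta> \<in> B \<inter> K"
    using torus_BK[OF \<alpha>(1)] G_upper_unip[of z] z BK_mmul by (simp add: B_iff K_iff upper_unip_def)
  define g where "g = mmul (xrep j) (mmul \<beta> (ginv (xrep j)))"
  have "\<alpha> - \<alpha> * z * y = \<alpha> * (1 - z * y)" by (simp add: algebra_simps)
  then have "\<alpha> - \<alpha> * z * y = \<alpha> * a" using z(3) by simp
  then have gM: "g = M2 (\<alpha> * a) (\<alpha> * z) (y * (\<alpha> * a - inverse (cj \<alpha>))) (y * \<alpha> * z + inverse (cj \<alpha>))"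
    unfolding g_def \<beta>_def xrep_conj y_def[symmetric] by (simp add: mult.assoc)
  have "P (j + (d - j)) (y * (\<alpha> * a - inverse (cj \<alpha>)))"
    unfolding y_def using P_mult[OF s_pi_power(2) P_unit_mult_diff_norm[OF \<alpha>(1) a(2) \<alpha>(2)]] .
  then have "P d (ent21 g)" using j gM by simp
  moreover have "g \<in> K" unfolding g_def using K_mmul xrep_K \<beta> K_ginv by simp
  ultimately obtain w where w: "lower_unip w \<in> Kd d" "mmul g (lower_unip w) \<in> B"
    using K_mmul_lower_unip_B d_pos by blast
  have "ent11 (mmul g (lower_unip w)) =
      \<alpha> * a * ent11 (lower_unip w) + \<alpha> * z * ent21 (lower_unip w)"
    by (simp add: gM lower_unip_def)
  then have "chiB (mmul g (lower_unip w)) = chi \<alpha> * chi a"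
    unfolding chiB_def using chi_entry11_Kd[OF \<alpha>(1) a(2) O_mult[OF unit_O[OF \<alpha>(1)] z(1)] w(1)] by simp
  moreover have "chiB \<beta> = chi \<alpha>" by (simp add: chiB_def \<beta>_def)
  ultimately have "chiB \<beta> \<noteq> chiB (mmul g (lower_unip w))" using a(4) chi_nz unit_nz[OF \<alpha>(1)] by simp
  then show ?thesis
    unfolding compatible_iff_conj[OF xrep_K] using \<beta> w unfolding g_def by blast
qed

lemma compatible_xrep_iff: "j \<le> d \<Longrightarrow> compatible (xrep j) \<longleftrightarrow> chi_trivial_S j"
  using compatible_xrep_if_trivial not_compatible_xrep_if_nontrivial by blast

lemma dim_Hom_eq_card_trivial_levels: "cdimH Hom = card {j. j \<le> d \<and> chi_trivial_S j}"
proof -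
  have inj: "inj_on xrep {..d}"
  proof (rule inj_onI, rule ccontr)
    fix i j assume ij: "i \<in> {..d}" "j \<in> {..d}" "xrep i = xrep j" "i \<noteq> j"
    have "mmul (xrep i) Imat \<notin> dcoset (xrep j)"
      by (rule xrep_dcoset_disjoint) (use ij B_Imat K_Imat in auto)
    then show False using ij(3) dcoset_self by simp
  qed
  have "cdimH Hom = card {x\<in>xrep ` {..d}. compatible x}"
  proof (rule dim_Hom_eq_card_compatible)
    show "finite (xrep ` {..d})" "xrep ` {..d} \<subseteq> K" using xrep_K by auto
    show "\<exists>x\<in>xrep ` {..d}. \<exists>\<beta>\<in>B \<inter> K. g \<in> dcoset (mmul x \<beta>)" if "G g" for g
      using dcoset_cover[OF that] by fastforce
    show "mmul x \<beta> \<notin> dcoset y"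
      if "x \<in> xrep ` {..d}" "y \<in> xrep ` {..d}" "x \<noteq> y" "\<beta> \<in> B \<inter> K" for x y \<beta>
      using that xrep_dcoset_disjoint by auto
  qed
  also have "{x\<in>xrep ` {..d}. compatible x} = xrep ` {j. j \<le> d \<and> chi_trivial_S j}"
    using compatible_xrep_iff by auto
  also have "card \<dots> = card {j. j \<le> d \<and> chi_trivial_S j}"
    using inj by (intro card_image) (auto intro: inj_on_subset)
  finally show ?thesis .
qed

lemma trivial_levels_eq:
  assumes "has_depth (\<lambda>a. cj a = a) v chi r"
  shows "{j. j \<le> d \<and> chi_trivial_S j} =
    (if r = 0 \<and> (\<forall>a. cj a = a \<and> Tmem v 0 a \<longrightarrow> chi a = 1) then {..d} else {Suc r..d})"
proof (cases "r = 0 \<and> (\<forall>a. cj a = a \<and> Tmem v 0 a \<longrightarrow> chi a = 1)")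
  case True
  then have "chi_trivial_S j" for j
    unfolding chi_trivial_S_def using Tmem_mono[of j _ 0] by blast
  then have "{j. j \<le> d \<and> chi_trivial_S j} = {..d}" by auto
  then show ?thesis by (subst if_P[OF True])
next
  case False
  obtain a where a: "cj a = a" "Tmem v r a" "chi a \<noteq> 1"
    using has_depth_nontrivial[OF assms False] by blast
  have "chi_trivial_S j \<longleftrightarrow> r < j" for j
  proof
    assume triv: "chi_trivial_S j"
    show "r < j"
    proof (rule ccontr)
      assume "\<not> r < j"
      then have "Tmem v j a" using Tmem_mono[OF a(2)] by simp
      then have "chi a = 1" using triv a(1) unfolding chi_trivial_S_def by blast
      then show False using a(3) by simp
    qed
  next
    assume "r < j"
    then show "chi_trivial_S j"
      unfolding chi_trivial_S_def using has_depth_trivial_above[OF assms] by simp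
  qed
  then have "{j. j \<le> d \<and> chi_trivial_S j} = {Suc r..d}" by (simp add: set_eq_iff Suc_le_eq conj_commute)
  then show ?thesis by (subst if_not_P[OF False])
qed

end

theorem proposition4p4:
  fixes cj :: "'e::field \<Rightarrow> 'e" and v :: "'e \<Rightarrow> int" and eps s :: 'e
    and chi :: "'e \<Rightarrow> complex" and r d :: nat
  assumes "unram_setup cj v eps s"
    and "is_char chi"
    and "minimal_depth cj v chi r"
    and "d \<ge> r + 1"
  shows "cdimH (HomK cj v (Vfix cj v chi d)) =
           (if r = 0 \<and> (\<forall>a. cj a = a \<and> Tmem v 0 a \<longrightarrow> chi a = 1) then d + 1 else d - r)"
proof -
  interpret unramified cj v eps s using assms(1) by unfold_locales
  have depth: "has_depth (\<lambda>_. True) v chi r" "has_depth (\<lambda>a. cj a = a) v chi r"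
    using assms(3) by (auto simp: minimal_depth_def)
  have "chi a = 1" if "a \<noteq> 0" "inP v d (a - 1)" for a
    using has_depth_trivial_above[OF depth(1), of d a] unit_if_P_diff_1[of d a] assms(4) that
    by (simp add: Tmem_iff)
  then interpret level_char cj v eps s chi d
    using assms(2,4) by unfold_locales auto
  show ?thesis
    using dim_Hom_eq_card_trivial_levels trivial_levels_eq[OF depth(2)] assms(4) by simp
qed

end
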